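(* Let $\Gamma$ be a discrete group with identity $e$, and let $L:\Gamma\to\mathbb{R}_+$ be a length function on $\Gamma$ with $L(g)>0$ for $g\ne e$, such that $\{g\in\Gamma:L(g)\le c\}$ is finite for every $c>0$ and $\sum_{g\neq e}\frac{1}{L(g)^2}<\infty$. Then $d(\varphi,\psi)<\infty$ for all states $\varphi,\psi$ of $C^*_r(\Gamma)$, and the metric $d$ induces on the state space $\mathcal{S}(C^*_r(\Gamma))$ the weak-$*$ topology.
   Context: A length function satisfies $L(gh)\le L(g)+L(h)$, $L(g^{-1})=L(g)$, $L(e)=0$. $C^*_r(\Gamma)$ is the reduced group C$^*$-algebra acting on $\ell^2(\Gamma)$ by the left regular representation ($\lambda_g\delta_h=\delta_{gh}$). $D$ is the unbounded operator on $\ell^2(\Gamma)$ with $D\delta_g=L(g)\delta_g$. For states $\varphi,\psi$ of $C^*_r(\Gamma)$, $d(\varphi,\psi)=\sup\{|\varphi(a)-\psi(a)|: a\in C^*_r(\Gamma),\ [D,a]\text{ bounded with }\|[D,a]\|\le1\}$. *)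

theory Defs
  imports "HOL-Analysis.Analysis"
begin

text \<open>Vectors of l2(Gamma) are functions Gamma => complex; (bounded) operators are
  maps between such functions, normalised to be 0 outside l2.
  The group Gamma is written additively (type class group_add, not necessarily
  commutative): identity 0, product g + h, inverse -g.\<close>

type_synonym 'g vec = "'g \<Rightarrow> complex"
type_synonym 'g op = "'g vec \<Rightarrow> 'g vec"

definition l2 :: "'g vec set" where
  "l2 = {f. (\<lambda>x. (cmod (f x))\<^sup>2) summable_on UNIV}"

definition l2norm :: "'g vec \<Rightarrow> real" where
  "l2norm f = sqrt (\<Sum>\<^sub>\<infinity>x. (cmod (f x))\<^sup>2)"

definition l2inner :: "'g vec \<Rightarrow> 'g vec \<Rightarrow> complex" where
  "l2inner f h = (\<Sum>\<^sub>\<infinity>x. cnj (f x) * h x)"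

definition bdd_op :: "'g op \<Rightarrow> bool" where
  "bdd_op T \<longleftrightarrow>
     (\<forall>f\<in>l2. T f \<in> l2) \<and>
     (\<forall>f\<in>l2. \<forall>h\<in>l2. \<forall>c::complex. T (\<lambda>x. f x + c * h x) = (\<lambda>x. T f x + c * T h x)) \<and>
     (\<exists>K. \<forall>f\<in>l2. l2norm (T f) \<le> K * l2norm f) \<and>
     (\<forall>f. f \<notin> l2 \<longrightarrow> T f = (\<lambda>_. 0))"

definition opnorm :: "'g op \<Rightarrow> real" where
  "opnorm T = Sup ((\<lambda>f. l2norm (T f)) ` {f \<in> l2. l2norm f \<le> 1})"

text \<open>Left regular representation: (lambda_g f)(x) = f(g^-1 x), so lambda_g delta_h = delta_(gh).\<close>
definition lreg :: "'g::group_add \<Rightarrow> 'g op" where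
  "lreg g = (\<lambda>f. if f \<in> l2 then (\<lambda>x. f (- g + x)) else (\<lambda>_. 0))"

text \<open>Finite linear combination sum_(g in F) c g * lambda_g (element of the group algebra).\<close>
definition grop :: "'g::group_add set \<Rightarrow> ('g \<Rightarrow> complex) \<Rightarrow> 'g op" where
  "grop F c = (\<lambda>f. if f \<in> l2 then (\<lambda>x. \<Sum>g\<in>F. c g * f (- g + x)) else (\<lambda>_. 0))"

definition Cred :: "('g::group_add) op set" where
  "Cred = {T. bdd_op T \<and>
     (\<forall>\<epsilon>>0. \<exists>F c. finite F \<and> opnorm (\<lambda>f x. T f x - grop F c f x) < \<epsilon>)}"

definition pos_op :: "'g op \<Rightarrow> bool" where
  "pos_op T \<longleftrightarrow> (\<forall>f\<in>l2. l2inner f (T f) \<in> \<real> \<and> Re (l2inner f (T f)) \<ge> 0)"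

definition is_state :: "('g::group_add op \<Rightarrow> complex) \<Rightarrow> bool" where
  "is_state \<phi> \<longleftrightarrow>
     (\<forall>T\<in>Cred. \<forall>S\<in>Cred. \<forall>c::complex. \<phi> (\<lambda>f x. T f x + c * S f x) = \<phi> T + c * \<phi> S) \<and>
     (\<forall>T\<in>Cred. pos_op T \<longrightarrow> \<phi> T \<in> \<real> \<and> Re (\<phi> T) \<ge> 0) \<and>
     \<phi> (lreg 0) = 1 \<and>
     (\<forall>T. T \<notin> Cred \<longrightarrow> \<phi> T = 0)"

definition states :: "('g::group_add op \<Rightarrow> complex) set" where
  "states = {\<phi>. is_state \<phi>}"

text \<open>a in C*_r(Gamma) with [D,a] bounded and of norm at most 1, where D delta_g = L(g) delta_g.
  The commutator is taken on the core of finitely supported vectors: a xi lies in dom D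
  and ||D(a xi) - a(D xi)|| <= ||xi||.\<close>
definition lip1 :: "('g::group_add \<Rightarrow> real) \<Rightarrow> 'g op \<Rightarrow> bool" where
  "lip1 L T \<longleftrightarrow> T \<in> Cred \<and>
     (\<forall>\<xi>. finite {x. \<xi> x \<noteq> 0} \<longrightarrow>
        (\<lambda>x. of_real (L x) * T \<xi> x) \<in> l2 \<and>
        l2norm (\<lambda>x. of_real (L x) * T \<xi> x - T (\<lambda>y. of_real (L y) * \<xi> y) x) \<le> l2norm \<xi>)"

definition dist_D :: "('g::group_add \<Rightarrow> real) \<Rightarrow> ('g op \<Rightarrow> complex) \<Rightarrow> ('g op \<Rightarrow> complex) \<Rightarrow> ereal" where
  "dist_D L \<phi> \<psi> = (SUP T \<in> {T. lip1 L T}. ereal (cmod (\<phi> T - \<psi> T)))"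

definition weakstar :: "('g::group_add op \<Rightarrow> complex) topology" where
  "weakstar = pullback_topology states (\<lambda>\<phi>. restrict \<phi> Cred)
                (product_topology (\<lambda>_. euclidean) Cred)"

definition dist_D_open :: "('g::group_add \<Rightarrow> real) \<Rightarrow> ('g op \<Rightarrow> complex) set \<Rightarrow> bool" where
  "dist_D_open L U \<longleftrightarrow> U \<subseteq> states \<and>
     (\<forall>\<phi>\<in>U. \<exists>\<epsilon>>0. \<forall>\<psi>\<in>states. dist_D L \<phi> \<psi> < ereal \<epsilon> \<longrightarrow> \<psi> \<in> U)"

end

theory Submission
  imports Defs
begin

text \<open>An element \<open>T\<close> of the reduced C*-algebra acts as left convolution by its kernel
  \<open>a = T \<delta>\<^sub>0\<close>. If \<open>\<parallel>[D, T]\<parallel> \<le> 1\<close> then \<open>\<parallel>L a\<parallel>\<^sub>2 \<le> 1\<close>, so \<open>|a g| \<le> 1 / L g\<close>, and by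
  Cauchy--Schwarz the \<open>\<ell>\<^sup>1\<close> norm of \<open>a\<close> outside the ball \<open>{L \<le> R}\<close> is at most
  \<open>\<tau> = (\<Sum>\<^bsub>L g > R\<^esub> 1 / L g\<^sup>2)\<^sup>1\<^sup>/\<^sup>2\<close>, which is small for large \<open>R\<close>. By Young's inequality
  \<open>T\<close> is then within \<open>\<tau>\<close> in norm of \<open>\<Sum>\<^bsub>L g \<le> R\<^esub> a g \<lambda>\<^sub>g\<close>, and as states are bounded,
  \<open>d(\<phi>, \<psi>) \<le> 4\<tau> + \<Sum>\<^bsub>0 < L g \<le> R\<^esub> |\<phi> \<lambda>\<^sub>g - \<psi> \<lambda>\<^sub>g| / L g\<close>.
  This is finite, and small on a weak-* neighbourhood. Conversely, subadditivity of \<open>L\<close> makes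
  \<open>\<lambda>\<^sub>g / L g\<close> a Lipschitz element, so \<open>|\<phi> \<lambda>\<^sub>g - \<psi> \<lambda>\<^sub>g| \<le> L g \<cdot> d(\<phi>, \<psi>)\<close>; since the group
  algebra is dense, every evaluation \<open>\<phi> \<mapsto> \<phi> a\<close> is then \<open>d\<close>-continuous.\<close>

section \<open>Square-summable functions\<close>

lemma l2_L2_set_bounded:
  assumes "\<And>E. finite E \<Longrightarrow> L2_set (\<lambda>x. cmod (f x)) E \<le> B"
  shows "f \<in> l2 \<and> l2norm f \<le> B"
proof -
  have B0: "0 \<le> B" using assms[of "{}"] by simp
  have sq: "(\<Sum>x\<in>E. (cmod (f x))\<^sup>2) \<le> B\<^sup>2" if "finite E" for E
  proof -
    have "(L2_set (\<lambda>x. cmod (f x)) E)\<^sup>2 \<le> B\<^sup>2"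
      using assms[OF that] by (simp add: power_mono)
    then show ?thesis unfolding L2_set_def by (simp add: sum_nonneg)
  qed
  have summ: "(\<lambda>x. (cmod (f x))\<^sup>2) summable_on UNIV"
    by (rule nonneg_bdd_above_summable_on) (auto intro!: bdd_aboveI2 sq)
  have "(\<Sum>\<^sub>\<infinity>x. (cmod (f x))\<^sup>2) \<le> B\<^sup>2"
    by (rule infsum_le_finite_sums[OF summ]) (use sq in auto)
  then have "l2norm f \<le> sqrt (B\<^sup>2)" unfolding l2norm_def by (rule real_sqrt_le_mono)
  with B0 show ?thesis using summ by (simp add: l2_def)
qed

lemma L2_set_le_l2norm:
  assumes "f \<in> l2"
  shows "L2_set (\<lambda>x. cmod (f x)) E \<le> l2norm f"
proof (cases "finite E")
  case True
  have "(\<Sum>x\<in>E. (cmod (f x))\<^sup>2) \<le> (\<Sum>\<^sub>\<infinity>x. (cmod (f x))\<^sup>2)"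
    by (rule finite_sum_le_infsum) (use assms True in \<open>auto simp: l2_def\<close>)
  then show ?thesis unfolding L2_set_def l2norm_def by (rule real_sqrt_le_mono)
next
  case False then show ?thesis by (simp add: l2norm_def infsum_nonneg)
qed

lemma l2norm_nonneg [simp]: "0 \<le> l2norm f"
  by (simp add: l2norm_def infsum_nonneg)

lemma norm_le_l2norm: "f \<in> l2 \<Longrightarrow> cmod (f x) \<le> l2norm f"
  using L2_set_le_l2norm[of f "{x}"] by (simp add: L2_set_def)

lemma l2_dominated:
  assumes "h \<in> l2" "\<And>x. cmod (f x) \<le> c * cmod (h x)" "0 \<le> c"
  shows "f \<in> l2 \<and> l2norm f \<le> c * l2norm h"
proof (rule l2_L2_set_bounded)
  fix E :: "'a set"
  have "L2_set (\<lambda>x. cmod (f x)) E \<le> L2_set (\<lambda>x. c * cmod (h x)) E"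
    by (rule L2_set_mono) (use assms in auto)
  also have "\<dots> = c * L2_set (\<lambda>x. cmod (h x)) E"
    using assms(3) by (simp add: L2_set_right_distrib)
  also have "\<dots> \<le> c * l2norm h"
    using L2_set_le_l2norm[OF assms(1)] assms(3) by (simp add: mult_left_mono)
  finally show "L2_set (\<lambda>x. cmod (f x)) E \<le> c * l2norm h" .
qed

lemma l2_add_scaled:
  assumes "f \<in> l2" "h \<in> l2"
  shows "(\<lambda>x. f x + c * h x) \<in> l2 \<and> l2norm (\<lambda>x. f x + c * h x) \<le> l2norm f + cmod c * l2norm h"
proof (rule l2_L2_set_bounded)
  fix E :: "'a set"
  have "L2_set (\<lambda>x. cmod (f x + c * h x)) E \<le> L2_set (\<lambda>x. cmod (f x) + cmod c * cmod (h x)) E"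
    by (rule L2_set_mono) (auto simp: norm_triangle_le norm_mult)
  also have "\<dots> \<le> L2_set (\<lambda>x. cmod (f x)) E + cmod c * L2_set (\<lambda>x. cmod (h x)) E"
    using L2_set_triangle_ineq by (metis L2_set_right_distrib norm_ge_zero)
  also have "\<dots> \<le> l2norm f + cmod c * l2norm h"
    using L2_set_le_l2norm[OF assms(1)] L2_set_le_l2norm[OF assms(2)]
    by (simp add: add_mono mult_left_mono)
  finally show "L2_set (\<lambda>x. cmod (f x + c * h x)) E \<le> l2norm f + cmod c * l2norm h" .
qed

lemma l2_zero [simp]: "(\<lambda>_. 0) \<in> l2" and l2norm_zero [simp]: "l2norm (\<lambda>_. 0) = 0"
  by (auto simp: l2_def l2norm_def)

lemma l2_scaled:
  assumes "f \<in> l2"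
  shows "(\<lambda>x. c * f x) \<in> l2 \<and> l2norm (\<lambda>x. c * f x) = cmod c * l2norm f"
proof -
  have "(\<lambda>x. (cmod (c * f x))\<^sup>2) = (\<lambda>x. (cmod c)\<^sup>2 * (cmod (f x))\<^sup>2)"
    by (simp add: norm_mult power_mult_distrib)
  moreover have "(\<lambda>x. (cmod c)\<^sup>2 * (cmod (f x))\<^sup>2) summable_on UNIV"
    using assms by (intro summable_on_cmult_right) (simp add: l2_def)
  moreover have "(\<Sum>\<^sub>\<infinity>x. (cmod c)\<^sup>2 * (cmod (f x))\<^sup>2) = (cmod c)\<^sup>2 * (\<Sum>\<^sub>\<infinity>x. (cmod (f x))\<^sup>2)"
    by (rule infsum_cmult_right')
  ultimately show ?thesis
    by (simp add: l2_def l2norm_def real_sqrt_mult)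
qed

lemma l2_diff:
  assumes "f \<in> l2" "h \<in> l2"
  shows "(\<lambda>x. f x - h x) \<in> l2 \<and> l2norm (\<lambda>x. f x - h x) \<le> l2norm f + l2norm h"
  using l2_add_scaled[OF assms, of "-1"] by simp

lemma l2_finite_support:
  assumes "finite {x. f x \<noteq> 0}"
  shows "f \<in> l2"
proof -
  have "(\<lambda>x. (cmod (f x))\<^sup>2) summable_on {x. f x \<noteq> 0}" using assms by simp
  moreover have "(\<lambda>x. (cmod (f x))\<^sup>2) summable_on {x. f x \<noteq> 0} \<longleftrightarrow>
      (\<lambda>x. (cmod (f x))\<^sup>2) summable_on UNIV"
    by (rule summable_on_cong_neutral) auto
  ultimately show ?thesis unfolding l2_def by simp
qed

lemma l2_reindex_bij:
  assumes "bij \<sigma>" "f \<in> l2"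
  shows "(\<lambda>x. f (\<sigma> x)) \<in> l2 \<and> l2norm (\<lambda>x. f (\<sigma> x)) = l2norm f"
proof -
  have "(\<lambda>x. (cmod (f (\<sigma> x)))\<^sup>2) summable_on UNIV"
    using summable_on_reindex_bij_betw[OF assms(1), of "\<lambda>y. (cmod (f y))\<^sup>2"] assms(2)
    by (simp add: l2_def)
  moreover have "(\<Sum>\<^sub>\<infinity>x. (cmod (f (\<sigma> x)))\<^sup>2) = (\<Sum>\<^sub>\<infinity>y. (cmod (f y))\<^sup>2)"
    using infsum_reindex_bij_betw[OF assms(1), of "\<lambda>y. (cmod (f y))\<^sup>2"] by simp
  ultimately show ?thesis by (simp add: l2_def l2norm_def)
qed

lemma l2_restrict:
  assumes "f \<in> l2"
  shows "(\<lambda>x. if x \<in> F then f x else 0) \<in> l2 \<and> l2norm (\<lambda>x. if x \<in> F then f x else 0) \<le> l2norm f"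
  using l2_dominated[OF assms, of "\<lambda>x. if x \<in> F then f x else 0" 1] by simp

lemma l2norm_restrict_finite:
  assumes "finite E"
  shows "l2norm (\<lambda>x. if x \<in> E then w x else 0) = L2_set (\<lambda>x. cmod (w x)) E"
proof -
  have "(\<Sum>\<^sub>\<infinity>x. (cmod (if x \<in> E then w x else 0))\<^sup>2) = (\<Sum>\<^sub>\<infinity>x\<in>E. (cmod (w x))\<^sup>2)"
    by (rule infsum_cong_neutral) auto
  then show ?thesis using assms by (simp add: l2norm_def L2_set_def)
qed

lemma l2_tail_small:
  assumes f: "f \<in> l2" and d: "d > 0"
  obtains F where "finite F" "l2norm (\<lambda>x. f x - (if x \<in> F then f x else 0)) \<le> d"
proof -
  have s: "(\<lambda>x. (cmod (f x))\<^sup>2) summable_on UNIV" using f by (simp add: l2_def)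
  obtain F where F: "finite F"
    and dist: "dist (\<Sum>x\<in>F. (cmod (f x))\<^sup>2) (\<Sum>\<^sub>\<infinity>x. (cmod (f x))\<^sup>2) \<le> d\<^sup>2"
    using infsum_finite_approximation[OF s, of "d\<^sup>2"] d by auto
  have "l2norm (\<lambda>x. f x - (if x \<in> F then f x else 0)) \<le> d"
  proof (rule l2_L2_set_bounded[THEN conjunct2])
    fix E :: "'a set" assume E: "finite E"
    have "(\<Sum>x\<in>E. (cmod (f x - (if x \<in> F then f x else 0)))\<^sup>2) = (\<Sum>x\<in>E - F. (cmod (f x))\<^sup>2)"
      by (rule sum.mono_neutral_cong_right) (use E in auto)
    also have "\<dots> = (\<Sum>x\<in>(E - F) \<union> F. (cmod (f x))\<^sup>2) - (\<Sum>x\<in>F. (cmod (f x))\<^sup>2)"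
      by (subst sum.union_disjoint) (use E F in auto)
    also have "\<dots> \<le> (\<Sum>\<^sub>\<infinity>x. (cmod (f x))\<^sup>2) - (\<Sum>x\<in>F. (cmod (f x))\<^sup>2)"
      using finite_sum_le_infsum[OF s, of "(E - F) \<union> F"] E F by auto
    also have "\<dots> \<le> d\<^sup>2" using dist by (simp add: dist_real_def)
    finally have "(L2_set (\<lambda>x. cmod (f x - (if x \<in> F then f x else 0))) E)\<^sup>2 \<le> d\<^sup>2"
      by (simp add: L2_set_def sum_nonneg)
    then show "L2_set (\<lambda>x. cmod (f x - (if x \<in> F then f x else 0))) E \<le> d"
      using d by (simp add: power2_le_iff_abs_le)
  qed
  with F that show ?thesis by blast
qed

lemma Cauchy_Schwarz_infsum:
  fixes u v :: "'a \<Rightarrow> real"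
  assumes "(\<lambda>x. (u x)\<^sup>2) summable_on UNIV" "(\<lambda>x. (v x)\<^sup>2) summable_on UNIV"
  shows "(\<lambda>x. \<bar>u x\<bar> * \<bar>v x\<bar>) summable_on UNIV \<and>
     (\<Sum>\<^sub>\<infinity>x. \<bar>u x\<bar> * \<bar>v x\<bar>) \<le> sqrt (\<Sum>\<^sub>\<infinity>x. (u x)\<^sup>2) * sqrt (\<Sum>\<^sub>\<infinity>x. (v x)\<^sup>2)"
proof -
  have L2_le: "L2_set w E \<le> sqrt (\<Sum>\<^sub>\<infinity>x. (w x)\<^sup>2)"
    if "(\<lambda>x. (w x)\<^sup>2) summable_on UNIV" "finite E" for w :: "'a \<Rightarrow> real" and E
    unfolding L2_set_def
    by (rule real_sqrt_le_mono, rule finite_sum_le_infsum) (use that in auto)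
  have b: "(\<Sum>x\<in>E. \<bar>u x\<bar> * \<bar>v x\<bar>) \<le> sqrt (\<Sum>\<^sub>\<infinity>x. (u x)\<^sup>2) * sqrt (\<Sum>\<^sub>\<infinity>x. (v x)\<^sup>2)"
    if "finite E" for E
  proof -
    have "(\<Sum>x\<in>E. \<bar>u x\<bar> * \<bar>v x\<bar>) \<le> L2_set u E * L2_set v E" by (rule L2_set_mult_ineq)
    also have "\<dots> \<le> sqrt (\<Sum>\<^sub>\<infinity>x. (u x)\<^sup>2) * sqrt (\<Sum>\<^sub>\<infinity>x. (v x)\<^sup>2)"
      by (rule mult_mono) (use L2_le assms that in \<open>auto simp: L2_set_nonneg infsum_nonneg\<close>)
    finally show ?thesis .
  qed
  have s: "(\<lambda>x. \<bar>u x\<bar> * \<bar>v x\<bar>) summable_on UNIV"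
    by (rule nonneg_bdd_above_summable_on) (auto intro!: bdd_aboveI2 b)
  then show ?thesis using infsum_le_finite_sums[OF s] b by auto
qed

lemma Cauchy_Schwarz_l2:
  assumes "f \<in> l2" "h \<in> l2" "\<And>x. cmod (p x) \<le> cmod (f x) * cmod (h x)"
  shows "p summable_on UNIV \<and> cmod (\<Sum>\<^sub>\<infinity>x. p x) \<le> l2norm f * l2norm h"
proof -
  from Cauchy_Schwarz_infsum[of "\<lambda>x. cmod (f x)" "\<lambda>x. cmod (h x)"] assms(1,2)
  have c: "(\<lambda>x. cmod (f x) * cmod (h x)) summable_on UNIV"
     "(\<Sum>\<^sub>\<infinity>x. cmod (f x) * cmod (h x)) \<le> l2norm f * l2norm h"
    by (auto simp: l2_def l2norm_def)
  have a: "(\<lambda>x. norm (p x)) summable_on UNIV"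
    by (rule summable_on_comparison_test[OF c(1)]) (use assms(3) in auto)
  have "cmod (\<Sum>\<^sub>\<infinity>x. p x) \<le> (\<Sum>\<^sub>\<infinity>x. cmod (p x))" by (rule norm_infsum_bound[OF a])
  also have "\<dots> \<le> (\<Sum>\<^sub>\<infinity>x. cmod (f x) * cmod (h x))"
    by (rule infsum_mono[OF a c(1)]) (use assms(3) in auto)
  finally show ?thesis using c(2) abs_summable_summable[OF a] by auto
qed

lemma l2inner_summable:
  assumes "f \<in> l2" "h \<in> l2"
  shows "(\<lambda>x. cnj (f x) * h x) summable_on UNIV"
  by (rule Cauchy_Schwarz_l2[OF assms, THEN conjunct1]) (simp add: norm_mult)

lemma l2inner_le:
  assumes "f \<in> l2" "h \<in> l2"
  shows "cmod (l2inner f h) \<le> l2norm f * l2norm h"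
  unfolding l2inner_def by (rule Cauchy_Schwarz_l2[OF assms, THEN conjunct2]) (simp add: norm_mult)

lemma l2inner_self: "f \<in> l2 \<Longrightarrow> l2inner f f = complex_of_real ((l2norm f)\<^sup>2)"
proof -
  assume f: "f \<in> l2"
  have "l2inner f f = (\<Sum>\<^sub>\<infinity>x. complex_of_real ((cmod (f x))\<^sup>2))"
    unfolding l2inner_def by (rule infsum_cong) (metis complex_norm_square mult.commute)
  also have "\<dots> = complex_of_real (\<Sum>\<^sub>\<infinity>x. (cmod (f x))\<^sup>2)"
    using f unfolding l2_def
    by (intro infsumI has_sum_of_real) (simp add: summable_iff_has_sum_infsum)
  finally show ?thesis using f by (simp add: l2norm_def infsum_nonneg)
qed

lemma l2inner_add_scaled:
  assumes "f \<in> l2" "u \<in> l2" "v \<in> l2"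
  shows "l2inner f (\<lambda>x. u x + c * v x) = l2inner f u + c * l2inner f v"
proof -
  have s1: "(\<lambda>x. cnj (f x) * u x) summable_on UNIV" by (rule l2inner_summable[OF assms(1,2)])
  have s2: "(\<lambda>x. c * (cnj (f x) * v x)) summable_on UNIV"
    by (rule summable_on_cmult_right, rule l2inner_summable[OF assms(1,3)])
  have "l2inner f (\<lambda>x. u x + c * v x) = (\<Sum>\<^sub>\<infinity>x. cnj (f x) * u x + c * (cnj (f x) * v x))"
    unfolding l2inner_def by (simp add: algebra_simps)
  also have "\<dots> = l2inner f u + c * l2inner f v"
    unfolding infsum_add[OF s1 s2] l2inner_def by (simp add: infsum_cmult_right')
  finally show ?thesis .
qed

lemma l2inner_diff:
  assumes f: "f \<in> l2" and w: "w \<in> l2" and f': "f' \<in> l2" and w': "w' \<in> l2"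
  shows "l2inner f w - l2inner f' w' = l2inner (\<lambda>x. f x - f' x) w + l2inner f' (\<lambda>x. w x - w' x)"
proof -
  have d1: "(\<lambda>x. f x - f' x) \<in> l2" using l2_diff[OF f f'] by blast
  have d2: "(\<lambda>x. w x - w' x) \<in> l2" using l2_diff[OF w w'] by blast
  have sA: "(\<lambda>x. cnj (f x - f' x) * w x) summable_on UNIV" using l2inner_summable[OF d1 w] by simp
  have sB: "(\<lambda>x. cnj (f' x) * (w x - w' x)) summable_on UNIV" using l2inner_summable[OF f' d2] by simp
  have sC: "(\<lambda>x. cnj (f' x) * w' x) summable_on UNIV" using l2inner_summable[OF f' w'] by simp
  have "l2inner f w = (\<Sum>\<^sub>\<infinity>x. (cnj (f x - f' x) * w x + cnj (f' x) * (w x - w' x)) + cnj (f' x) * w' x)"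
    unfolding l2inner_def by (rule infsum_cong) (simp add: algebra_simps)
  also have "\<dots> = (\<Sum>\<^sub>\<infinity>x. cnj (f x - f' x) * w x) + (\<Sum>\<^sub>\<infinity>x. cnj (f' x) * (w x - w' x)) + l2inner f' w'"
    unfolding infsum_add[OF summable_on_add[OF sA sB] sC] infsum_add[OF sA sB] l2inner_def ..
  finally show ?thesis unfolding l2inner_def by simp
qed

lemma l2inner_finite_support:
  assumes "finite S" "\<And>y. y \<notin> S \<Longrightarrow> u y = 0"
  shows "l2inner u w = (\<Sum>x\<in>S. cnj (u x) * w x)"
proof -
  have "l2inner u w = (\<Sum>\<^sub>\<infinity>x\<in>S. cnj (u x) * w x)"
    unfolding l2inner_def by (rule infsum_cong_neutral) (use assms in auto)
  then show ?thesis using assms by simp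
qed

section \<open>Convolution\<close>

lemma bij_neg_add: "bij (\<lambda>g. - g + (x::'g::group_add))"
  using bij_comp[OF bij_uminus bij_plus_right[of x]] by (simp add: comp_def)

lemma bij_add_neg: "bij (\<lambda>y. (x::'g::group_add) + - y)"
  using bij_comp[OF bij_uminus bij_plus[of x]] by (simp add: comp_def)

lemma l2_translate:
  fixes f :: "'g::group_add vec"
  assumes "f \<in> l2"
  shows "(\<lambda>x. f (- g + x)) \<in> l2 \<and> l2norm (\<lambda>x. f (- g + x)) = l2norm f"
  using l2_reindex_bij[OF bij_plus[of "- g"] assms] by simp

lemma l2_reflect_translate:
  fixes f :: "'g::group_add vec"
  assumes "f \<in> l2"
  shows "(\<lambda>g. f (- g + x)) \<in> l2 \<and> l2norm (\<lambda>g. f (- g + x)) = l2norm f"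
  using l2_reindex_bij[OF bij_neg_add[of x] assms] by simp

definition conv :: "('g::group_add \<Rightarrow> complex) \<Rightarrow> 'g vec \<Rightarrow> 'g vec" where
  "conv b f = (\<lambda>x. \<Sum>\<^sub>\<infinity>g. b g * f (- g + x))"

definition Conv :: "('g::group_add \<Rightarrow> complex) \<Rightarrow> 'g op" where
  "Conv b = (\<lambda>f. if f \<in> l2 then conv b f else (\<lambda>_. 0))"

definition delta :: "'g \<Rightarrow> 'g vec" where
  "delta g = (\<lambda>x. if x = g then 1 else 0)"

text \<open>The kernel of the adjoint of convolution by \<open>b\<close>.\<close>
definition adj :: "('g::group_add \<Rightarrow> complex) \<Rightarrow> ('g \<Rightarrow> complex)" where
  "adj b = (\<lambda>g. cnj (b (- g)))"

definition maps_l2_bounded :: "'g op \<Rightarrow> real \<Rightarrow> bool" where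
  "maps_l2_bounded X K \<longleftrightarrow> (\<forall>f\<in>l2. X f \<in> l2 \<and> l2norm (X f) \<le> K * l2norm f)"

lemma conv_summable_le:
  assumes "b \<in> l2" "f \<in> l2"
  shows "(\<lambda>g. b g * f (- g + x)) summable_on UNIV \<and> cmod (conv b f x) \<le> l2norm b * l2norm f"
proof -
  note t = l2_reflect_translate[OF assms(2), of x]
  have "(\<lambda>g. b g * f (- g + x)) summable_on UNIV \<and>
      cmod (\<Sum>\<^sub>\<infinity>g. b g * f (- g + x)) \<le> l2norm b * l2norm (\<lambda>g. f (- g + x))"
    by (rule Cauchy_Schwarz_l2[OF assms(1) t[THEN conjunct1]]) (simp add: norm_mult)
  then show ?thesis using t by (simp add: conv_def)
qed

lemma conv_add_scaled_right:
  assumes "b \<in> l2" "f \<in> l2" "h \<in> l2"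
  shows "conv b (\<lambda>x. f x + c * h x) = (\<lambda>x. conv b f x + c * conv b h x)"
proof
  fix x
  have s1: "(\<lambda>g. b g * f (- g + x)) summable_on UNIV" using conv_summable_le[OF assms(1,2)] by blast
  have s2: "(\<lambda>g. c * (b g * h (- g + x))) summable_on UNIV"
    by (rule summable_on_cmult_right) (use conv_summable_le[OF assms(1,3)] in blast)
  show "conv b (\<lambda>x. f x + c * h x) x = conv b f x + c * conv b h x"
    unfolding conv_def using infsum_add[OF s1 s2]
    by (simp add: algebra_simps infsum_cmult_right')
qed

lemma conv_add_scaled_left:
  assumes "b \<in> l2" "b' \<in> l2" "f \<in> l2"
  shows "conv (\<lambda>g. b g + c * b' g) f = (\<lambda>x. conv b f x + c * conv b' f x)"
proof
  fix x
  have s1: "(\<lambda>g. b g * f (- g + x)) summable_on UNIV" using conv_summable_le[OF assms(1,3)] by blast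
  have s2: "(\<lambda>g. c * (b' g * f (- g + x))) summable_on UNIV"
    by (rule summable_on_cmult_right) (use conv_summable_le[OF assms(2,3)] in blast)
  show "conv (\<lambda>g. b g + c * b' g) f x = conv b f x + c * conv b' f x"
    unfolding conv_def using infsum_add[OF s1 s2]
    by (simp add: algebra_simps infsum_cmult_right')
qed

lemma conv_diff_left:
  assumes "b \<in> l2" "b' \<in> l2" "f \<in> l2"
  shows "conv b f x - conv b' f x = conv (\<lambda>g. b g - b' g) f x"
  using conv_add_scaled_left[OF assms, of "-1"] by (simp add: fun_eq_iff)

lemma conv_scaled_left: "conv (\<lambda>g. c * k g) f = (\<lambda>x. c * conv k f x)"
  unfolding conv_def by (simp add: mult.assoc infsum_cmult_right')

lemma conv_finite_kernel:
  assumes "finite G" "\<And>g. g \<notin> G \<Longrightarrow> k g = 0"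
  shows "conv k f x = (\<Sum>g\<in>G. k g * f (- g + x))"
proof -
  have "conv k f x = (\<Sum>\<^sub>\<infinity>g\<in>G. k g * f (- g + x))"
    unfolding conv_def by (rule infsum_cong_neutral) (use assms in auto)
  then show ?thesis using assms by simp
qed

lemma conv_finite_support:
  fixes f :: "'g::group_add vec"
  assumes "finite S" "\<And>y. y \<notin> S \<Longrightarrow> f y = 0"
  shows "conv b f x = (\<Sum>y\<in>S. b (x + - y) * f y)"
proof -
  have "conv b f x = (\<Sum>\<^sub>\<infinity>y. b (x + - y) * f (- (x + - y) + x))"
    unfolding conv_def using infsum_reindex_bij_betw[OF bij_add_neg[of x], of "\<lambda>g. b g * f (- g + x)"]
    by simp
  also have "\<dots> = (\<Sum>\<^sub>\<infinity>y\<in>S. b (x + - y) * f y)"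
    by (rule infsum_cong_neutral) (use assms in \<open>auto simp: minus_add add.assoc\<close>)
  finally show ?thesis using assms by simp
qed

lemma delta_l2 [simp]: "delta g \<in> l2"
  by (rule l2_finite_support) (simp add: delta_def)

lemma l2norm_delta [simp]: "l2norm (delta g) = 1"
proof -
  have "(\<Sum>\<^sub>\<infinity>x. (cmod (delta g x))\<^sup>2) = (\<Sum>\<^sub>\<infinity>x\<in>{g}. (cmod (delta g x))\<^sup>2)"
    by (rule infsum_cong_neutral) (auto simp: delta_def)
  then show ?thesis by (simp add: l2norm_def delta_def)
qed

lemma conv_delta_zero: "conv b (delta 0) = b"
  by (rule ext, subst conv_finite_support[of "{0}"]) (auto simp: delta_def)

lemma grop_eq_Conv:
  assumes "finite G"
  shows "grop G c = Conv (\<lambda>g. if g \<in> G then c g else 0)"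
proof -
  have "conv (\<lambda>g. if g \<in> G then c g else 0) f x = (\<Sum>g\<in>G. c g * f (- g + x))" for f x
    by (subst conv_finite_kernel[OF assms]) auto
  then show ?thesis unfolding grop_def Conv_def by (auto intro!: ext)
qed

lemma conv_finite_kernel_eq_grop:
  assumes "finite G" "f \<in> l2"
  shows "conv (\<lambda>g. if g \<in> G then c g else 0) f = grop G c f"
  using grop_eq_Conv[OF assms(1), of c] assms(2) by (simp add: Conv_def)

lemma summable_norm_finite_support:
  assumes "finite {g. k g \<noteq> 0}"
  shows "(\<lambda>g. cmod (k g)) summable_on UNIV"
proof -
  have "(\<lambda>g. cmod (k g)) summable_on {g. k g \<noteq> 0}" using assms by simp
  moreover have "(\<lambda>g. cmod (k g)) summable_on {g. k g \<noteq> 0} \<longleftrightarrow> (\<lambda>g. cmod (k g)) summable_on UNIV"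
    by (rule summable_on_cong_neutral) auto
  ultimately show ?thesis by simp
qed

lemma infsum_sum_swap:
  fixes F :: "'x \<Rightarrow> 'y \<Rightarrow> 'z::{topological_comm_monoid_add, t2_space}"
  assumes "finite E" "\<And>x. x \<in> E \<Longrightarrow> (\<lambda>g. F x g) summable_on A"
  shows "(\<lambda>g. \<Sum>x\<in>E. F x g) summable_on A \<and> (\<Sum>\<^sub>\<infinity>g\<in>A. \<Sum>x\<in>E. F x g) = (\<Sum>x\<in>E. \<Sum>\<^sub>\<infinity>g\<in>A. F x g)"
  using assms
proof (induction E rule: finite_induct)
  case (insert y E)
  then have s1: "(\<lambda>g. F y g) summable_on A" and s2: "(\<lambda>g. \<Sum>x\<in>E. F x g) summable_on A" by auto
  then show ?case
    using insert summable_on_add[OF s1 s2] infsum_add[OF s1 s2] by simp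
qed simp

text \<open>The Cauchy--Schwarz step of Young's inequality, with \<open>|b| = \<surd>|b| \<cdot> \<surd>|b|\<close>.\<close>
lemma conv_norm_sq_le:
  assumes b1: "(\<lambda>g. cmod (b g)) summable_on UNIV" and f: "f \<in> l2"
  shows "(\<lambda>g. cmod (b g) * (cmod (f (- g + x)))\<^sup>2) summable_on UNIV"
    and "(cmod (conv b f x))\<^sup>2 \<le> (\<Sum>\<^sub>\<infinity>g. cmod (b g)) * (\<Sum>\<^sub>\<infinity>g. cmod (b g) * (cmod (f (- g + x)))\<^sup>2)"
proof -
  define N where "N = (\<Sum>\<^sub>\<infinity>g. cmod (b g))"
  define W where "W = (\<Sum>\<^sub>\<infinity>g. cmod (b g) * (cmod (f (- g + x)))\<^sup>2)"
  have pw: "(cmod (f (- g + x)))\<^sup>2 \<le> (l2norm f)\<^sup>2" for g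
    using norm_le_l2norm[OF f, of "- g + x"] by (simp add: power_mono)
  show Wsum: "(\<lambda>g. cmod (b g) * (cmod (f (- g + x)))\<^sup>2) summable_on UNIV"
    by (rule summable_on_comparison_test[OF summable_on_cmult_left[OF b1, of "(l2norm f)\<^sup>2"]])
      (auto intro: mult_left_mono pw)
  have s: "(\<lambda>g. cmod (b g) * cmod (f (- g + x))) summable_on UNIV"
    by (rule summable_on_comparison_test[OF summable_on_cmult_left[OF b1, of "l2norm f"]])
      (auto intro: mult_left_mono norm_le_l2norm[OF f])
  have "cmod (conv b f x) \<le> (\<Sum>\<^sub>\<infinity>g. cmod (b g * f (- g + x)))"
    unfolding conv_def by (rule norm_infsum_bound) (use s in \<open>simp add: norm_mult\<close>)
  also have "\<dots> = (\<Sum>\<^sub>\<infinity>g. \<bar>sqrt (cmod (b g))\<bar> * \<bar>sqrt (cmod (b g)) * cmod (f (- g + x))\<bar>)"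
    by (rule infsum_cong) (simp add: norm_mult abs_mult mult.assoc[symmetric])
  also have "\<dots> \<le> sqrt N * sqrt W"
    using Cauchy_Schwarz_infsum[of "\<lambda>g. sqrt (cmod (b g))" "\<lambda>g. sqrt (cmod (b g)) * cmod (f (- g + x))"]
      b1 Wsum by (simp add: N_def W_def power_mult_distrib)
  finally have "(cmod (conv b f x))\<^sup>2 \<le> (sqrt N * sqrt W)\<^sup>2"
    by (simp add: power_mono)
  then show "(cmod (conv b f x))\<^sup>2 \<le> N * W"
    by (simp add: power_mult_distrib N_def W_def infsum_nonneg)
qed

lemma Young_conv_l1_l2:
  assumes b1: "(\<lambda>g. cmod (b g)) summable_on UNIV" and f: "f \<in> l2"
  shows "conv b f \<in> l2 \<and> l2norm (conv b f) \<le> (\<Sum>\<^sub>\<infinity>g. cmod (b g)) * l2norm f"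
proof (rule l2_L2_set_bounded)
  fix E :: "'a set" assume E: "finite E"
  define N where "N = (\<Sum>\<^sub>\<infinity>g. cmod (b g))"
  have N0: "0 \<le> N" unfolding N_def by (simp add: infsum_nonneg)
  note Wsum = conv_norm_sq_le(1)[OF b1 f]
  have swap: "(\<lambda>g. \<Sum>x\<in>E. cmod (b g) * (cmod (f (- g + x)))\<^sup>2) summable_on UNIV \<and>
      (\<Sum>\<^sub>\<infinity>g. \<Sum>x\<in>E. cmod (b g) * (cmod (f (- g + x)))\<^sup>2) =
      (\<Sum>x\<in>E. \<Sum>\<^sub>\<infinity>g. cmod (b g) * (cmod (f (- g + x)))\<^sup>2)"
    by (rule infsum_sum_swap[OF E Wsum])
  have translate_le: "(\<Sum>x\<in>E. cmod (b g) * (cmod (f (- g + x)))\<^sup>2) \<le> cmod (b g) * (l2norm f)\<^sup>2" for g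
  proof -
    have "L2_set (\<lambda>x. cmod (f (- g + x))) E \<le> l2norm f"
      using L2_set_le_l2norm[OF l2_translate[OF f, THEN conjunct1], of g E] l2_translate[OF f, of g]
      by simp
    then have "(L2_set (\<lambda>x. cmod (f (- g + x))) E)\<^sup>2 \<le> (l2norm f)\<^sup>2" by (simp add: power_mono)
    then have "(\<Sum>x\<in>E. (cmod (f (- g + x)))\<^sup>2) \<le> (l2norm f)\<^sup>2"
      unfolding L2_set_def by (simp add: sum_nonneg)
    then show ?thesis by (simp add: sum_distrib_left[symmetric] mult_left_mono)
  qed
  have "(\<Sum>x\<in>E. (cmod (conv b f x))\<^sup>2) \<le> (\<Sum>x\<in>E. N * (\<Sum>\<^sub>\<infinity>g. cmod (b g) * (cmod (f (- g + x)))\<^sup>2))"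
    by (rule sum_mono) (use conv_norm_sq_le(2)[OF b1 f] in \<open>simp add: N_def\<close>)
  also have "\<dots> = N * (\<Sum>\<^sub>\<infinity>g. \<Sum>x\<in>E. cmod (b g) * (cmod (f (- g + x)))\<^sup>2)"
    using swap by (simp add: sum_distrib_left)
  also have "\<dots> \<le> N * (\<Sum>\<^sub>\<infinity>g. cmod (b g) * (l2norm f)\<^sup>2)"
    using swap summable_on_cmult_left[OF b1] translate_le
    by (intro mult_left_mono[OF _ N0] infsum_mono) blast+
  also have "\<dots> = (N * l2norm f)\<^sup>2"
    by (simp add: infsum_cmult_left' N_def power_mult_distrib power2_eq_square)
  finally have "(L2_set (\<lambda>x. cmod (conv b f x)) E)\<^sup>2 \<le> (N * l2norm f)\<^sup>2"
    unfolding L2_set_def by (simp add: sum_nonneg)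
  then show "L2_set (\<lambda>x. cmod (conv b f x)) E \<le> N * l2norm f"
    using N0 by (simp add: power2_le_iff_abs_le)
qed

section \<open>Bounded operators and the reduced C*-algebra\<close>

lemma bdd_op_add_scaled:
  "bdd_op T \<Longrightarrow> f \<in> l2 \<Longrightarrow> h \<in> l2 \<Longrightarrow> T (\<lambda>x. f x + c * h x) = (\<lambda>x. T f x + c * T h x)"
  unfolding bdd_op_def by blast

lemma bdd_op_l2: "bdd_op T \<Longrightarrow> f \<in> l2 \<Longrightarrow> T f \<in> l2"
  unfolding bdd_op_def by blast

lemma bdd_op_outside_l2: "bdd_op T \<Longrightarrow> f \<notin> l2 \<Longrightarrow> T f = (\<lambda>_. 0)"
  unfolding bdd_op_def by blast

lemma bdd_op_zero: assumes "bdd_op T" shows "T (\<lambda>_. 0) = (\<lambda>_. 0)"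
  using bdd_op_add_scaled[OF assms l2_zero l2_zero, of 1] by (auto simp: fun_eq_iff)

lemma bdd_op_scaled: "bdd_op T \<Longrightarrow> f \<in> l2 \<Longrightarrow> T (\<lambda>x. c * f x) = (\<lambda>x. c * T f x)"
  using bdd_op_add_scaled[OF _ l2_zero, of T f c] bdd_op_zero[of T] by simp

lemma bdd_op_combination:
  assumes "bdd_op T" "bdd_op S"
  shows "bdd_op (\<lambda>f x. T f x + c * S f x)"
proof -
  obtain K1 where K1: "\<forall>f\<in>l2. l2norm (T f) \<le> K1 * l2norm f" using assms(1) unfolding bdd_op_def by blast
  obtain K2 where K2: "\<forall>f\<in>l2. l2norm (S f) \<le> K2 * l2norm f" using assms(2) unfolding bdd_op_def by blast
  have bound: "(\<lambda>x. T f x + c * S f x) \<in> l2 \<and>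
      l2norm (\<lambda>x. T f x + c * S f x) \<le> (K1 + cmod c * K2) * l2norm f" if "f \<in> l2" for f
  proof -
    note sum = l2_add_scaled[OF bdd_op_l2[OF assms(1) that] bdd_op_l2[OF assms(2) that], of c]
    have "l2norm (T f) + cmod c * l2norm (S f) \<le> K1 * l2norm f + cmod c * (K2 * l2norm f)"
      using K1 K2 that by (intro add_mono mult_left_mono) auto
    with sum show ?thesis by (simp add: algebra_simps)
  qed
  have "(\<lambda>x. T (\<lambda>x. f x + d * h x) x + c * S (\<lambda>x. f x + d * h x) x) =
     (\<lambda>x. (T f x + c * S f x) + d * (T h x + c * S h x))" if "f \<in> l2" "h \<in> l2" for f h d
    using bdd_op_add_scaled[OF assms(1) that, of d] bdd_op_add_scaled[OF assms(2) that, of d]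
    by (simp add: algebra_simps)
  with bound show ?thesis
    unfolding bdd_op_def using bdd_op_outside_l2[OF assms(1)] bdd_op_outside_l2[OF assms(2)] by auto
qed

lemma opnorm_upper:
  assumes "bdd_op X" "f \<in> l2" "l2norm f \<le> 1"
  shows "l2norm (X f) \<le> opnorm X"
proof -
  obtain K where K: "\<forall>f\<in>l2. l2norm (X f) \<le> K * l2norm f" using assms(1) unfolding bdd_op_def by blast
  have "bdd_above ((\<lambda>f. l2norm (X f)) ` {f \<in> l2. l2norm f \<le> 1})"
  proof (rule bdd_aboveI2)
    fix g :: "'a vec" assume g: "g \<in> {f \<in> l2. l2norm f \<le> 1}"
    have "l2norm (X g) \<le> K * l2norm g" using K g by blast
    also have "\<dots> \<le> \<bar>K\<bar> * l2norm g" by (simp add: mult_right_mono)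
    also have "\<dots> \<le> \<bar>K\<bar>" using g by (simp add: mult_left_le)
    finally show "l2norm (X g) \<le> \<bar>K\<bar>" .
  qed
  then show ?thesis unfolding opnorm_def by (rule cSup_upper[rotated]) (use assms in auto)
qed

lemma opnorm_nonneg: "bdd_op X \<Longrightarrow> 0 \<le> opnorm X"
  using opnorm_upper[of X "\<lambda>_. 0"] by (simp add: bdd_op_zero)

lemma opnorm_le:
  assumes "bdd_op X" "f \<in> l2"
  shows "l2norm (X f) \<le> opnorm X * l2norm f"
proof (cases "l2norm f = 0")
  case True
  obtain K where "\<forall>f\<in>l2. l2norm (X f) \<le> K * l2norm f" using assms(1) unfolding bdd_op_def by blast
  then have "l2norm (X f) \<le> 0" using True assms(2) by force
  then show ?thesis using True by simp
next
  case False
  define n where "n = l2norm f"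
  have n: "0 < n" using False n_def l2norm_nonneg[of f] by linarith
  define c where "c = complex_of_real (1 / n)"
  have cn: "cmod c = 1 / n" using n by (simp add: c_def norm_divide)
  define g where "g = (\<lambda>x. c * f x)"
  have g: "g \<in> l2" "l2norm g = 1" using l2_scaled[OF assms(2), of c] n cn
    by (auto simp: g_def n_def)
  have "X g = (\<lambda>x. c * X f x)" unfolding g_def by (rule bdd_op_scaled[OF assms])
  then have "l2norm (X g) = (1/n) * l2norm (X f)"
    using l2_scaled[OF bdd_op_l2[OF assms], of c] cn by simp
  moreover have "l2norm (X g) \<le> opnorm X" by (rule opnorm_upper[OF assms(1) g(1)]) (simp add: g)
  ultimately show ?thesis using n by (simp add: n_def field_simps)
qed

lemma opnorm_least:
  assumes "\<And>f. f \<in> l2 \<Longrightarrow> l2norm f \<le> 1 \<Longrightarrow> l2norm (X f) \<le> B"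
  shows "opnorm X \<le> B"
  unfolding opnorm_def by (rule cSup_least) (use assms in \<open>auto intro: l2_zero\<close>)

lemma opnorm_combination_le:
  assumes "bdd_op X" "bdd_op Y"
  shows "opnorm (\<lambda>f x. X f x + c * Y f x) \<le> opnorm X + cmod c * opnorm Y"
proof (rule opnorm_least)
  fix f :: "'a vec" assume f: "f \<in> l2" "l2norm f \<le> 1"
  have "l2norm (\<lambda>x. X f x + c * Y f x) \<le> l2norm (X f) + cmod c * l2norm (Y f)"
    using l2_add_scaled[OF bdd_op_l2[OF assms(1) f(1)] bdd_op_l2[OF assms(2) f(1)]] by blast
  also have "\<dots> \<le> opnorm X * l2norm f + cmod c * (opnorm Y * l2norm f)"
    by (intro add_mono mult_left_mono opnorm_le assms f) auto
  also have "\<dots> \<le> opnorm X + cmod c * opnorm Y"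
    using f opnorm_nonneg[OF assms(1)] opnorm_nonneg[OF assms(2)]
    by (intro add_mono mult_left_mono) (auto simp: mult_left_le)
  finally show "l2norm (\<lambda>x. X f x + c * Y f x) \<le> opnorm X + cmod c * opnorm Y" .
qed

lemma maps_l2_bounded_opnorm: "bdd_op X \<Longrightarrow> maps_l2_bounded X (opnorm X)"
  unfolding maps_l2_bounded_def using opnorm_le bdd_op_l2 by blast

lemma bdd_op_Conv:
  assumes "b \<in> l2" "maps_l2_bounded (conv b) K"
  shows "bdd_op (Conv b)"
proof -
  have "\<forall>f\<in>l2. \<forall>h\<in>l2. \<forall>c. Conv b (\<lambda>x. f x + c * h x) = (\<lambda>x. Conv b f x + c * Conv b h x)"
  proof (intro ballI allI)
    fix f h :: "'a vec" and c assume fh: "f \<in> l2" "h \<in> l2"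
    have "(\<lambda>x. f x + c * h x) \<in> l2" using l2_add_scaled[OF fh] by blast
    then show "Conv b (\<lambda>x. f x + c * h x) = (\<lambda>x. Conv b f x + c * Conv b h x)"
      using conv_add_scaled_right[OF assms(1) fh] fh by (simp add: Conv_def)
  qed
  then show ?thesis using assms(2) unfolding bdd_op_def maps_l2_bounded_def Conv_def by auto
qed

lemma bdd_op_grop:
  assumes "finite G"
  shows "bdd_op (grop G c)"
proof -
  define k where "k = (\<lambda>g. if g \<in> G then c g else 0)"
  have fk: "finite {g. k g \<noteq> 0}" using assms by (rule finite_subset[rotated]) (auto simp: k_def)
  have "maps_l2_bounded (conv k) (\<Sum>\<^sub>\<infinity>g. cmod (k g))"
    unfolding maps_l2_bounded_def using Young_conv_l1_l2[OF summable_norm_finite_support[OF fk]] by blast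
  then show ?thesis using bdd_op_Conv[OF l2_finite_support[OF fk]] grop_eq_Conv[OF assms] by (simp add: k_def)
qed

lemma Cred_bdd_op: "T \<in> Cred \<Longrightarrow> bdd_op T"
  unfolding Cred_def by blast

lemma Cred_grop:
  assumes "finite G"
  shows "grop G c \<in> Cred"
proof -
  have "opnorm (\<lambda>f x. grop G c f x - grop G c f x) \<le> 0"
    by (rule opnorm_least) simp
  then show ?thesis unfolding Cred_def using bdd_op_grop[OF assms] assms
    by (auto intro!: exI[of _ G] exI[of _ c])
qed

lemma lreg_eq_grop: "lreg g = grop {g} (\<lambda>_. 1)"
  by (auto simp: lreg_def grop_def fun_eq_iff)

lemma lreg_Cred: "lreg g \<in> Cred"
  using Cred_grop[of "{g}" "\<lambda>_. 1"] by (simp add: lreg_eq_grop)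

lemma zero_op_Cred: "(\<lambda>f x. 0) \<in> (Cred :: 'g::group_add op set)"
proof -
  have "(\<lambda>f x. 0) = grop ({}::'g set) (\<lambda>_. 0)" by (auto simp: grop_def fun_eq_iff)
  then show ?thesis using Cred_grop[of "{}::'g set" "\<lambda>_. 0"] by simp
qed

lemma Cred_approx:
  assumes "T \<in> Cred" "e > 0"
  obtains G c where "finite G" "opnorm (\<lambda>f x. T f x - grop G c f x) < e"
    "bdd_op (\<lambda>f x. T f x - grop G c f x)"
proof -
  obtain G c where G: "finite G" "opnorm (\<lambda>f x. T f x - grop G c f x) < e"
    using assms unfolding Cred_def by blast
  have "bdd_op (\<lambda>f x. T f x + (-1) * grop G c f x)"
    by (rule bdd_op_combination[OF Cred_bdd_op[OF assms(1)] bdd_op_grop[OF G(1)]])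
  then have "bdd_op (\<lambda>f x. T f x - grop G c f x)" by simp
  with G show ?thesis by (rule that)
qed

text \<open>Every element of the reduced C*-algebra is left convolution by its value on \<open>\<delta>\<^sub>0\<close>:
  this holds for the group algebra and passes to norm limits because both sides depend
  continuously on the operator.\<close>
lemma Cred_eq_conv:
  assumes T: "T \<in> Cred" and f: "f \<in> l2"
  shows "T f = conv (T (delta 0)) f"
proof
  fix x
  define a where "a = T (delta 0)"
  have a: "a \<in> l2" unfolding a_def by (rule bdd_op_l2[OF Cred_bdd_op[OF T]]) simp
  define n where "n = l2norm f"
  have n0: "0 \<le> n" by (simp add: n_def)
  have "cmod (T f x - conv a f x) \<le> e" if e: "e > 0" for e
  proof -
    define e' where "e' = e / (2 * (n + 1))"
    have e': "e' > 0" using e n0 by (simp add: e'_def)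
    obtain G c where G: "finite G" and op: "opnorm (\<lambda>f x. T f x - grop G c f x) < e'"
      and bX: "bdd_op (\<lambda>f x. T f x - grop G c f x)"
      using Cred_approx[OF T e'] by blast
    define k where "k = (\<lambda>g. if g \<in> G then c g else 0)"
    have k: "k \<in> l2" by (rule l2_finite_support, rule finite_subset[OF _ G]) (auto simp: k_def)
    have "cmod (T f x - conv k f x) \<le> l2norm (\<lambda>x. T f x - grop G c f x)"
      using norm_le_l2norm[OF bdd_op_l2[OF bX f]] conv_finite_kernel_eq_grop[OF G f] by (simp add: k_def)
    also have "\<dots> \<le> opnorm (\<lambda>f x. T f x - grop G c f x) * n"
      using opnorm_le[OF bX f] by (simp add: n_def)
    also have "\<dots> \<le> e' * n" using op n0 by (simp add: mult_right_mono)
    finally have 1: "cmod (T f x - conv k f x) \<le> e' * n" .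
    have "l2norm (\<lambda>g. a g - k g) \<le> opnorm (\<lambda>f x. T f x - grop G c f x) * 1"
      using opnorm_le[OF bX delta_l2[of 0]] conv_finite_kernel_eq_grop[OF G delta_l2[of 0], of c]
      by (simp add: a_def k_def conv_delta_zero)
    then have 2: "l2norm (\<lambda>g. a g - k g) \<le> e'" using op by simp
    have "cmod (conv k f x - conv a f x) = cmod (conv (\<lambda>g. a g - k g) f x)"
      using conv_diff_left[OF a k f, of x] by (simp add: norm_minus_commute)
    also have "\<dots> \<le> l2norm (\<lambda>g. a g - k g) * n"
      unfolding n_def by (rule conv_summable_le[OF l2_diff[OF a k, THEN conjunct1] f, THEN conjunct2])
    also have "\<dots> \<le> e' * n" using 2 n0 by (simp add: mult_right_mono)
    finally have 3: "cmod (conv k f x - conv a f x) \<le> e' * n" .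
    have "cmod (T f x - conv a f x) \<le> cmod (T f x - conv k f x) + cmod (conv k f x - conv a f x)"
      using norm_triangle_ineq[of "T f x - conv k f x" "conv k f x - conv a f x"] by simp
    also have "\<dots> \<le> 2 * e' * n" using 1 3 by simp
    also have "\<dots> \<le> e" using e n0 by (simp add: e'_def field_simps)
    finally show ?thesis .
  qed
  then have "cmod (T f x - conv a f x) = 0"
    by (metis dense_ge norm_ge_zero order.antisym)
  then show "T f x = conv (T (delta 0)) f x" by (simp add: a_def)
qed

lemma grop_combination:
  assumes "finite G1" "finite G2"
  shows "grop (G1 \<union> G2) (\<lambda>g. (if g \<in> G1 then c1 g else 0) + c * (if g \<in> G2 then c2 g else 0)) f =
    (\<lambda>x. grop G1 c1 f x + c * grop G2 c2 f x)"
proof (cases "f \<in> l2")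
  case True
  have restrict: "(\<Sum>g\<in>G1 \<union> G2. (if g \<in> G then d g else 0) * u g) = (\<Sum>g\<in>G. d g * u g)"
    if "G \<subseteq> G1 \<union> G2" for G d and u :: "'a \<Rightarrow> complex"
  proof -
    have "(\<Sum>g\<in>G1 \<union> G2. (if g \<in> G then d g else 0) * u g) = (\<Sum>g\<in>G. (if g \<in> G then d g else 0) * u g)"
      by (rule sum.mono_neutral_right) (use that assms in auto)
    then show ?thesis by simp
  qed
  have eq: "(\<Sum>g\<in>G1 \<union> G2. ((if g \<in> G1 then c1 g else 0) + c * (if g \<in> G2 then c2 g else 0)) * u g) =
      (\<Sum>g\<in>G1. c1 g * u g) + c * (\<Sum>g\<in>G2. c2 g * u g)" for u :: "'a \<Rightarrow> complex"
  proof -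
    have "(\<Sum>g\<in>G1 \<union> G2. ((if g \<in> G1 then c1 g else 0) + c * (if g \<in> G2 then c2 g else 0)) * u g) =
        (\<Sum>g\<in>G1 \<union> G2. (if g \<in> G1 then c1 g else 0) * u g) +
        c * (\<Sum>g\<in>G1 \<union> G2. (if g \<in> G2 then c2 g else 0) * u g)"
      unfolding sum_distrib_left sum.distrib[symmetric] by (rule sum.cong) (simp_all add: algebra_simps)
    also have "\<dots> = (\<Sum>g\<in>G1. c1 g * u g) + c * (\<Sum>g\<in>G2. c2 g * u g)"
      using restrict[of G1 c1 u] restrict[of G2 c2 u] by simp
    finally show ?thesis .
  qed
  show ?thesis unfolding grop_def using True by (simp only: if_True eq simp_thms)
qed (simp add: grop_def)

lemma Cred_combination:
  assumes T: "T \<in> Cred" and S: "S \<in> Cred"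
  shows "(\<lambda>f x. T f x + c * S f x) \<in> Cred"
proof -
  have "\<exists>G d. finite G \<and> opnorm (\<lambda>f x. T f x + c * S f x - grop G d f x) < e" if e: "e > 0" for e
  proof -
    define e' where "e' = e / (2 * (cmod c + 1))"
    have c1: "0 < cmod c + 1" using norm_ge_zero[of c] by linarith
    have e': "0 < e'" "e' + cmod c * e' < e"
    proof -
      show "0 < e'" unfolding e'_def using e c1 by simp
      have "e' * (cmod c + 1) = e / 2" using c1 by (simp add: e'_def field_simps)
      then have "e' + cmod c * e' = e / 2" by (simp add: algebra_simps)
      then show "e' + cmod c * e' < e" using e by simp
    qed
    obtain G1 c1 where G1: "finite G1" and op1: "opnorm (\<lambda>f x. T f x - grop G1 c1 f x) < e'"
      and b1: "bdd_op (\<lambda>f x. T f x - grop G1 c1 f x)"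
      using Cred_approx[OF T e'(1)] by blast
    obtain G2 c2 where G2: "finite G2" and op2: "opnorm (\<lambda>f x. S f x - grop G2 c2 f x) < e'"
      and b2: "bdd_op (\<lambda>f x. S f x - grop G2 c2 f x)"
      using Cred_approx[OF S e'(1)] by blast
    define d where "d = (\<lambda>g. (if g \<in> G1 then c1 g else 0) + c * (if g \<in> G2 then c2 g else 0))"
    have "(\<lambda>f x. T f x + c * S f x - grop (G1 \<union> G2) d f x) =
        (\<lambda>f x. (T f x - grop G1 c1 f x) + c * (S f x - grop G2 c2 f x))"
      using grop_combination[OF G1 G2] by (auto simp: d_def fun_eq_iff algebra_simps)
    then have "opnorm (\<lambda>f x. T f x + c * S f x - grop (G1 \<union> G2) d f x) \<le> e' + cmod c * e'"
      using opnorm_combination_le[OF b1 b2, of c] op1 mult_left_mono[OF less_imp_le[OF op2], of "cmod c"]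
      by simp
    then show ?thesis using G1 G2 e'(2) by (intro exI[of _ "G1 \<union> G2"] exI[of _ d]) auto
  qed
  then show ?thesis
    using bdd_op_combination[OF Cred_bdd_op[OF T] Cred_bdd_op[OF S]] unfolding Cred_def by blast
qed

lemma Cred_scaled: "T \<in> Cred \<Longrightarrow> (\<lambda>f x. c * T f x) \<in> Cred"
  using Cred_combination[OF zero_op_Cred, of T c] by simp

section \<open>Adjoints\<close>

lemma l2_adj:
  assumes "b \<in> l2"
  shows "adj b \<in> l2 \<and> l2norm (adj b) = l2norm b"
proof -
  have "(\<lambda>x. b (- x)) \<in> l2 \<and> l2norm (\<lambda>x. b (- x)) = l2norm b" by (rule l2_reindex_bij[OF bij_uminus assms])
  then show ?thesis by (simp add: adj_def l2_def l2norm_def)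
qed

lemma l2inner_conv_adj:
  fixes f u :: "'g::group_add vec"
  assumes "finite Sf" "\<And>y. y \<notin> Sf \<Longrightarrow> f y = 0" "finite Su" "\<And>y. y \<notin> Su \<Longrightarrow> u y = 0"
  shows "l2inner u (conv (adj b) f) = cnj (l2inner f (conv b u))"
proof -
  have "l2inner u (conv (adj b) f) = (\<Sum>x\<in>Su. \<Sum>y\<in>Sf. cnj (u x) * cnj (b (y + - x)) * f y)"
    by (simp add: l2inner_finite_support[OF assms(3,4)] conv_finite_support[OF assms(1,2)]
        adj_def minus_add sum_distrib_left mult.assoc)
  also have "\<dots> = (\<Sum>y\<in>Sf. \<Sum>x\<in>Su. cnj (u x) * cnj (b (y + - x)) * f y)"
    by (rule sum.swap)
  also have "\<dots> = cnj (l2inner f (conv b u))"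
    by (simp add: l2inner_finite_support[OF assms(1,2)] conv_finite_support[OF assms(3,4)]
        sum_distrib_left mult_ac)
  finally show ?thesis .
qed

lemma norm_conv_diff_le:
  assumes "b \<in> l2" "f \<in> l2" "h \<in> l2"
  shows "cmod (conv b f x - conv b h x) \<le> l2norm b * l2norm (\<lambda>y. f y - h y)"
proof -
  have "conv b f x - conv b h x = conv b (\<lambda>y. f y - h y) x"
    using conv_add_scaled_right[OF assms, of "-1"] by (simp add: fun_eq_iff)
  then show ?thesis
    using conv_summable_le[OF assms(1) l2_diff[OF assms(2,3), THEN conjunct1], of x] by simp
qed

text \<open>The finitely supported case of the bound for the adjoint, by duality: testing
  \<open>w = b\<^sup>* * f\<close> against its own restriction \<open>u\<close> to a finite set gives \<open>\<parallel>u\<parallel>\<^sup>2 \<le> \<parallel>f\<parallel> \<parallel>b * u\<parallel>\<close>.\<close>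
lemma adj_bounded_finite_support:
  assumes K: "0 \<le> K" and bK: "maps_l2_bounded (conv b) K"
    and S: "finite S" "\<And>y. y \<notin> S \<Longrightarrow> f y = 0"
  shows "conv (adj b) f \<in> l2 \<and> l2norm (conv (adj b) f) \<le> K * l2norm f"
proof (rule l2_L2_set_bounded)
  fix E :: "'a set" assume E: "finite E"
  define w where "w = conv (adj b) f"
  define u where "u = (\<lambda>x. if x \<in> E then w x else 0)"
  define N where "N = L2_set (\<lambda>x. cmod (w x)) E"
  have u: "u \<in> l2" "l2norm u = N"
    using l2_finite_support[of u] finite_subset[OF _ E] l2norm_restrict_finite[OF E, of w]
    by (auto simp: u_def N_def)
  have f: "f \<in> l2" by (rule l2_finite_support, rule finite_subset[OF _ S(1)]) (use S in auto)
  have "l2inner u w = (\<Sum>x\<in>E. cnj (u x) * w x)"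
    by (rule l2inner_finite_support[OF E]) (simp add: u_def)
  also have "\<dots> = (\<Sum>x\<in>E. complex_of_real ((cmod (w x))\<^sup>2))"
    by (rule sum.cong) (use complex_norm_square in \<open>auto simp: u_def mult.commute\<close>)
  also have "\<dots> = complex_of_real (N\<^sup>2)" by (simp add: N_def L2_set_def sum_nonneg)
  finally have "N\<^sup>2 = cmod (l2inner u w)" by (metis abs_power2 norm_of_real)
  also have "\<dots> = cmod (cnj (l2inner f (conv b u)))"
    unfolding w_def by (subst l2inner_conv_adj[OF S E]) (simp_all add: u_def)
  also have "\<dots> = cmod (l2inner f (conv b u))" by (rule complex_mod_cnj)
  also have "\<dots> \<le> l2norm f * l2norm (conv b u)"
    by (rule l2inner_le[OF f]) (use bK u in \<open>simp add: maps_l2_bounded_def\<close>)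
  also have "\<dots> \<le> l2norm f * (K * N)"
    using bK u by (intro mult_left_mono) (auto simp: maps_l2_bounded_def)
  finally have NN: "N * N \<le> (K * l2norm f) * N" by (simp add: power2_eq_square mult_ac)
  have "N \<le> K * l2norm f"
  proof (cases "N = 0")
    case False
    then have "0 < N" by (simp add: N_def order_less_le)
    with NN show ?thesis by simp
  qed (use K in simp)
  then show "L2_set (\<lambda>x. cmod (conv (adj b) f x)) E \<le> K * l2norm f" by (simp add: N_def w_def)
qed

lemma maps_l2_bounded_adj:
  assumes b: "b \<in> l2" and K: "0 \<le> K" and bK: "maps_l2_bounded (conv b) K"
  shows "maps_l2_bounded (conv (adj b)) K"
  unfolding maps_l2_bounded_def
proof
  fix f :: "'a vec" assume f: "f \<in> l2"
  define w where "w = conv (adj b) f"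
  have ab: "adj b \<in> l2" "l2norm (adj b) = l2norm b" using l2_adj[OF b] by auto
  have "L2_set (\<lambda>x. cmod (w x)) E \<le> K * l2norm f" if E: "finite E" for E :: "'a set"
  proof (rule field_le_epsilon)
    fix e :: real assume e: "0 < e"
    define d where "d = e / (sqrt (real (card E)) * l2norm b + 1)"
    have q: "0 < sqrt (real (card E)) * l2norm b + 1" by (simp add: add_nonneg_pos)
    have d: "0 < d" "sqrt (real (card E)) * (l2norm b * d) \<le> e"
    proof -
      show "0 < d" unfolding d_def using e q by simp
      have "sqrt (real (card E)) * (l2norm b * d) \<le> (sqrt (real (card E)) * l2norm b + 1) * d"
        using \<open>0 < d\<close> by (simp add: algebra_simps)
      also have "\<dots> = e" unfolding d_def using q by simp
      finally show "sqrt (real (card E)) * (l2norm b * d) \<le> e" .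
    qed
    obtain F where F: "finite F" and tail: "l2norm (\<lambda>x. f x - (if x \<in> F then f x else 0)) \<le> d"
      using l2_tail_small[OF f d(1)] by blast
    define fF :: "'a vec" where "fF = (\<lambda>x. if x \<in> F then f x else 0)"
    have fF: "fF \<in> l2" "l2norm fF \<le> l2norm f" using l2_restrict[OF f] by (auto simp: fF_def)
    define wF where "wF = conv (adj b) fF"
    have wF: "wF \<in> l2" "l2norm wF \<le> K * l2norm f"
      using adj_bounded_finite_support[OF K bK F, of fF] fF(2) K
      by (auto simp: fF_def wF_def intro: order_trans mult_left_mono)
    have "cmod (w x) \<le> cmod (wF x) + l2norm b * d" for x
    proof -
      have "cmod (w x - wF x) \<le> l2norm (adj b) * l2norm (\<lambda>y. f y - fF y)"
        unfolding w_def wF_def by (rule norm_conv_diff_le[OF ab(1) f fF(1)])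
      also have "\<dots> \<le> l2norm b * d" using tail ab(2) by (simp add: fF_def mult_left_mono)
      finally show ?thesis using norm_triangle_ineq2[of "w x" "wF x"] by linarith
    qed
    then have "L2_set (\<lambda>x. cmod (w x)) E \<le> L2_set (\<lambda>x. cmod (wF x) + l2norm b * d) E"
      by (intro L2_set_mono) auto
    also have "\<dots> \<le> L2_set (\<lambda>x. cmod (wF x)) E + L2_set (\<lambda>x. l2norm b * d) E"
      by (rule L2_set_triangle_ineq)
    also have "\<dots> \<le> K * l2norm f + sqrt (real (card E)) * (l2norm b * d)"
      using L2_set_le_l2norm[OF wF(1), of E] wF(2) d(1) by (simp add: L2_set_constant)
    also have "\<dots> \<le> K * l2norm f + e" using d(2) by simp
    finally show "L2_set (\<lambda>x. cmod (w x)) E \<le> K * l2norm f + e" .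
  qed
  then show "conv (adj b) f \<in> l2 \<and> l2norm (conv (adj b) f) \<le> K * l2norm f"
    unfolding w_def by (rule l2_L2_set_bounded)
qed

lemma Cred_maps_l2_bounded:
  assumes "X \<in> Cred"
  shows "X (delta 0) \<in> l2" "maps_l2_bounded (conv (X (delta 0))) (opnorm X)" "0 \<le> opnorm X"
proof -
  note bX = Cred_bdd_op[OF assms]
  show "X (delta 0) \<in> l2" by (rule bdd_op_l2[OF bX]) simp
  show "maps_l2_bounded (conv (X (delta 0))) (opnorm X)"
    unfolding maps_l2_bounded_def
  proof
    fix f :: "'a vec" assume f: "f \<in> l2"
    have "conv (X (delta 0)) f = X f" by (rule Cred_eq_conv[OF assms f, symmetric])
    then show "conv (X (delta 0)) f \<in> l2 \<and> l2norm (conv (X (delta 0)) f) \<le> opnorm X * l2norm f"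
      using maps_l2_bounded_opnorm[OF bX] f by (simp add: maps_l2_bounded_def)
  qed
  show "0 \<le> opnorm X" by (rule opnorm_nonneg[OF bX])
qed

lemma adj_diff: "adj (\<lambda>g. b g - k g) = (\<lambda>g. adj b g - adj k g)"
  by (simp add: adj_def fun_eq_iff)

lemma opnorm_Conv_adj_sub_grop_le:
  assumes X: "X \<in> Cred" and G: "finite G" and bZ: "bdd_op (\<lambda>f x. X f x - grop G c f x)"
  shows "opnorm (\<lambda>f x. Conv (adj (X (delta 0))) f x - grop (uminus ` G) (adj c) f x)
    \<le> opnorm (\<lambda>f x. X f x - grop G c f x)"
proof -
  define b where "b = X (delta 0)"
  define Z where "Z = (\<lambda>f x. X f x - grop G c f x)"
  define k where "k = (\<lambda>g. if g \<in> G then c g else 0)"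
  note b = Cred_maps_l2_bounded[OF X, folded b_def]
  have ab: "adj b \<in> l2" using l2_adj[OF b(1)] by blast
  have k: "k \<in> l2" by (rule l2_finite_support, rule finite_subset[OF _ G]) (auto simp: k_def)
  have bk: "(\<lambda>g. b g - k g) \<in> l2" using l2_diff[OF b(1) k] by blast
  have "Z f = conv (\<lambda>g. b g - k g) f" if f: "f \<in> l2" for f
    using conv_finite_kernel_eq_grop[OF G f, of c] Cred_eq_conv[OF X f] conv_diff_left[OF b(1) k f]
    by (simp add: Z_def k_def b_def fun_eq_iff)
  then have opZ: "maps_l2_bounded (conv (\<lambda>g. b g - k g)) (opnorm Z)"
    using maps_l2_bounded_opnorm[OF bZ[folded Z_def]] by (simp add: maps_l2_bounded_def)
  have Z0: "0 \<le> opnorm Z" by (rule opnorm_nonneg[OF bZ[folded Z_def]])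
  have opA: "maps_l2_bounded (conv (adj (\<lambda>g. b g - k g))) (opnorm Z)"
    by (rule maps_l2_bounded_adj[OF bk Z0 opZ])
  have ak: "(\<lambda>g. if g \<in> uminus ` G then adj c g else 0) = adj k"
    by (auto simp: adj_def k_def fun_eq_iff image_iff intro: bexI[of _ "- _"])
  have akl: "adj k \<in> l2" using l2_adj[OF k] by blast
  have eq: "Conv (adj b) f x - grop (uminus ` G) (adj c) f x = conv (adj (\<lambda>g. b g - k g)) f x"
    if "f \<in> l2" for f x
    using conv_finite_kernel_eq_grop[OF finite_imageI[OF G, of uminus] that, of "adj c"]
      conv_diff_left[OF ab akl that, of x] that
    by (simp add: Conv_def ak adj_diff)
  show ?thesis unfolding b_def[symmetric] Z_def[symmetric]
  proof (rule opnorm_least)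
    fix f :: "'a vec" assume f: "f \<in> l2" "l2norm f \<le> 1"
    have "l2norm (\<lambda>x. Conv (adj b) f x - grop (uminus ` G) (adj c) f x) \<le> opnorm Z * l2norm f"
      using opA f eq[OF f(1)] by (simp add: maps_l2_bounded_def)
    also have "\<dots> \<le> opnorm Z" using f Z0 by (simp add: mult_left_le)
    finally show "l2norm (\<lambda>x. Conv (adj b) f x - grop (uminus ` G) (adj c) f x) \<le> opnorm Z" .
  qed
qed

lemma Cred_Conv_adj:
  assumes X: "X \<in> Cred"
  shows "Conv (adj (X (delta 0))) \<in> Cred"
proof -
  note b = Cred_maps_l2_bounded[OF X]
  have "\<exists>G d. finite G \<and> opnorm (\<lambda>f x. Conv (adj (X (delta 0))) f x - grop G d f x) < e"
    if e: "e > 0" for e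
  proof -
    obtain G c where G: "finite G" and op: "opnorm (\<lambda>f x. X f x - grop G c f x) < e"
      and bZ: "bdd_op (\<lambda>f x. X f x - grop G c f x)"
      using Cred_approx[OF X e] by blast
    show ?thesis
      using opnorm_Conv_adj_sub_grop_le[OF X G bZ] op G
      by (intro exI[of _ "uminus ` G"] exI[of _ "adj c"]) auto
  qed
  moreover have "bdd_op (Conv (adj (X (delta 0))))"
    by (rule bdd_op_Conv[OF l2_adj[OF b(1), THEN conjunct1] maps_l2_bounded_adj[OF b(1) b(3) b(2)]])
  ultimately show ?thesis unfolding Cred_def by blast
qed

section \<open>Hermitian kernels and states\<close>

lemma hermitian_form_real_finite_support:
  fixes h :: "'g::group_add \<Rightarrow> complex"
  assumes sym: "\<And>g. h (- g) = cnj (h g)" and S: "finite S" "\<And>y. y \<notin> S \<Longrightarrow> u y = 0"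
  shows "Im (l2inner u (conv h u)) = 0"
proof -
  have Q: "l2inner u (conv h u) = (\<Sum>x\<in>S. \<Sum>y\<in>S. cnj (u x) * h (x + - y) * u y)"
    by (simp add: l2inner_finite_support[OF S] conv_finite_support[OF S] sum_distrib_left mult.assoc)
  have cj: "cnj (h (x - y)) = h (y - x)" for x y
    using sym[of "x - y"] by simp
  have "cnj (l2inner u (conv h u)) = (\<Sum>x\<in>S. \<Sum>y\<in>S. u x * h (y + - x) * cnj (u y))"
    unfolding Q by (simp add: cj)
  also have "\<dots> = (\<Sum>y\<in>S. \<Sum>x\<in>S. u x * h (y + - x) * cnj (u y))" by (rule sum.swap)
  also have "\<dots> = l2inner u (conv h u)" unfolding Q by (simp add: mult_ac)
  finally show ?thesis by (metis Reals_cnj_iff complex_is_Real_iff)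
qed

lemma form_diff_le:
  assumes h: "h \<in> l2" and K: "maps_l2_bounded (conv h) K" "0 \<le> K"
    and f: "f \<in> l2" and f': "f' \<in> l2" "l2norm f' \<le> l2norm f"
  shows "cmod (l2inner f (conv h f) - l2inner f' (conv h f')) \<le> 2 * K * l2norm f * l2norm (\<lambda>x. f x - f' x)"
proof -
  define r where "r = (\<lambda>x. f x - f' x)"
  have r: "r \<in> l2" using l2_diff[OF f f'(1)] by (simp add: r_def)
  have w: "conv h f \<in> l2" "l2norm (conv h f) \<le> K * l2norm f"
    and w': "conv h f' \<in> l2"
    and wr: "conv h r \<in> l2" "l2norm (conv h r) \<le> K * l2norm r"
    using K(1) f f'(1) r by (auto simp: maps_l2_bounded_def)
  have "(\<lambda>x. conv h f x - conv h f' x) = conv h r"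
    using conv_add_scaled_right[OF h f f'(1), of "-1"] by (simp add: r_def)
  then have "l2inner f (conv h f) - l2inner f' (conv h f') = l2inner r (conv h f) + l2inner f' (conv h r)"
    using l2inner_diff[OF f w(1) f'(1) w'] by (simp add: r_def)
  then have "cmod (l2inner f (conv h f) - l2inner f' (conv h f')) \<le>
      l2norm r * l2norm (conv h f) + l2norm f' * l2norm (conv h r)"
    using l2inner_le[OF r w(1)] l2inner_le[OF f'(1) wr(1)] by (metis norm_triangle_le add_mono)
  also have "\<dots> \<le> l2norm r * (K * l2norm f) + l2norm f * (K * l2norm r)"
    using w(2) wr(2) f'(2) by (intro add_mono mult_mono) (auto intro: K(2))
  finally show ?thesis by (simp add: r_def algebra_simps)
qed

lemma hermitian_conv_form_real:
  fixes h :: "'g::group_add \<Rightarrow> complex"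
  assumes h: "h \<in> l2" and K: "maps_l2_bounded (conv h) K" "0 \<le> K"
    and sym: "\<And>g. h (- g) = cnj (h g)" and f: "f \<in> l2"
  shows "Im (l2inner f (conv h f)) = 0"
proof -
  have "\<bar>Im (l2inner f (conv h f))\<bar> \<le> 0 + e" if e: "e > 0" for e
  proof -
    define d where "d = e / (2 * K * l2norm f + 1)"
    have q: "0 < 2 * K * l2norm f + 1" using K(2) by (simp add: add_nonneg_pos)
    have d: "0 < d" using e q by (simp add: d_def)
    obtain F where F: "finite F" and tail: "l2norm (\<lambda>x. f x - (if x \<in> F then f x else 0)) \<le> d"
      using l2_tail_small[OF f d] by blast
    define fF :: "'g vec" where "fF = (\<lambda>x. if x \<in> F then f x else 0)"
    have fF: "fF \<in> l2" "l2norm fF \<le> l2norm f" using l2_restrict[OF f] by (auto simp: fF_def)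
    have "Im (l2inner fF (conv h fF)) = 0"
      by (rule hermitian_form_real_finite_support[where S = F]) (simp_all add: sym F fF_def)
    then have "\<bar>Im (l2inner f (conv h f))\<bar> \<le> cmod (l2inner f (conv h f) - l2inner fF (conv h fF))"
      by (metis Im_complex_div_lemma abs_Im_le_cmod diff_zero minus_complex.sel(2))
    also have "\<dots> \<le> 2 * K * l2norm f * l2norm (\<lambda>x. f x - fF x)"
      by (rule form_diff_le[OF h K f fF])
    also have "\<dots> \<le> (2 * K * l2norm f + 1) * d"
      using tail K(2) d by (intro mult_mono) (auto simp: fF_def)
    also have "\<dots> = e" using q by (simp add: d_def)
    finally show ?thesis by simp
  qed
  then have "\<bar>Im (l2inner f (conv h f))\<bar> \<le> 0" by (rule field_le_epsilon)
  then show ?thesis by simp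
qed

lemma state_combination:
  "is_state \<phi> \<Longrightarrow> T \<in> Cred \<Longrightarrow> S \<in> Cred \<Longrightarrow> \<phi> (\<lambda>f x. T f x + c * S f x) = \<phi> T + c * \<phi> S"
  unfolding is_state_def by blast

lemma state_pos: "is_state \<phi> \<Longrightarrow> T \<in> Cred \<Longrightarrow> pos_op T \<Longrightarrow> \<phi> T \<in> \<real> \<and> Re (\<phi> T) \<ge> 0"
  unfolding is_state_def by blast

lemma state_one: "is_state \<phi> \<Longrightarrow> \<phi> (lreg 0) = 1"
  unfolding is_state_def by blast

lemma state_zero: "is_state \<phi> \<Longrightarrow> \<phi> (\<lambda>f x. 0) = 0"
  using state_combination[OF _ zero_op_Cred zero_op_Cred, of \<phi> 1] by simp

lemma state_scaled: "is_state \<phi> \<Longrightarrow> T \<in> Cred \<Longrightarrow> \<phi> (\<lambda>f x. c * T f x) = c * \<phi> T"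
  using state_combination[OF _ zero_op_Cred, of \<phi> T c] state_zero[of \<phi>] by simp

lemma state_grop:
  assumes \<phi>: "is_state \<phi>" and G: "finite G"
  shows "\<phi> (grop G c) = (\<Sum>g\<in>G. c g * \<phi> (lreg g))"
  using G
proof (induction G rule: finite_induct)
  case empty
  have "grop {} c = (\<lambda>f x. 0)" by (auto simp: grop_def fun_eq_iff)
  then show ?case using state_zero[OF \<phi>] by simp
next
  case (insert g G)
  have "grop (insert g G) c = (\<lambda>f x. grop G c f x + c g * lreg g f x)"
    using insert.hyps by (auto simp: grop_def lreg_def fun_eq_iff)
  then show ?case
    using state_combination[OF \<phi> Cred_grop[OF insert.hyps(1)] lreg_Cred] insert by simp
qed

text \<open>The operators \<open>1 \<plusminus> H/c\<close> are positive, so positivity and normalisation of \<open>\<phi>\<close>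
  give \<open>|\<phi> H| \<le> c\<close>.\<close>
lemma state_le_of_form_bound:
  fixes H :: "'g::group_add op"
  assumes \<phi>: "is_state \<phi>" and H: "H \<in> Cred" and c: "0 < c"
    and Q: "\<And>f. f \<in> l2 \<Longrightarrow> Im (l2inner f (H f)) = 0 \<and> cmod (l2inner f (H f)) \<le> c * (l2norm f)\<^sup>2"
  shows "cmod (\<phi> H) \<le> c"
proof -
  have claim: "Im (\<phi> H) = 0 \<and> s * Re (\<phi> H) \<le> c" if s: "\<bar>s\<bar> = 1" for s :: real
  proof -
    define c' where "c' = complex_of_real (- s / c)"
    define P where "P = (\<lambda>f x. lreg 0 f x + c' * H f x)"
    have P: "P \<in> Cred" unfolding P_def by (rule Cred_combination[OF lreg_Cred H])
    have "pos_op P" unfolding pos_op_def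
    proof (intro ballI conjI)
      fix f :: "'g vec" assume f: "f \<in> l2"
      have Hf: "H f \<in> l2" by (rule bdd_op_l2[OF Cred_bdd_op[OF H] f])
      define z where "z = l2inner f (H f)"
      have z: "Im z = 0" "\<bar>Re z\<bar> \<le> c * (l2norm f)\<^sup>2"
        using Q[OF f] abs_Re_le_cmod[of z] by (auto simp: z_def)
      have "lreg 0 f = f" using f by (simp add: lreg_def)
      then have e: "l2inner f (P f) = complex_of_real ((l2norm f)\<^sup>2) + c' * z"
        unfolding P_def z_def using l2inner_add_scaled[OF f f Hf, of c'] l2inner_self[OF f] by simp
      show "l2inner f (P f) \<in> \<real>" unfolding e using z(1) by (simp add: complex_is_Real_iff c'_def)
      have "s * Re z \<le> \<bar>Re z\<bar>" using s abs_ge_self[of "s * Re z"] by (simp add: abs_mult)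
      then have "(s / c) * Re z \<le> \<bar>Re z\<bar> / c" using c by (simp add: divide_right_mono)
      also have "\<dots> \<le> (l2norm f)\<^sup>2" using z(2) c by (simp add: divide_le_eq mult.commute)
      finally show "0 \<le> Re (l2inner f (P f))" unfolding e by (simp add: c'_def z(1))
    qed
    then have pp: "\<phi> P \<in> \<real>" "0 \<le> Re (\<phi> P)" using state_pos[OF \<phi> P] by auto
    have eP: "\<phi> P = 1 + c' * \<phi> H"
      unfolding P_def using state_combination[OF \<phi> lreg_Cred H] state_one[OF \<phi>] by simp
    have "(- s / c) * Im (\<phi> H) = 0" using pp(1) unfolding eP by (simp add: complex_is_Real_iff c'_def)
    then have "Im (\<phi> H) = 0" using s c by auto
    moreover have "(s / c) * Re (\<phi> H) \<le> 1" using pp(2) unfolding eP by (simp add: c'_def)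
    then have "s * Re (\<phi> H) \<le> c" using c by (simp add: divide_le_eq mult.commute)
    ultimately show ?thesis by simp
  qed
  have "cmod (\<phi> H) = \<bar>Re (\<phi> H)\<bar>" using claim[of 1] by (simp add: cmod_eq_Re)
  also have "\<dots> \<le> c" using claim[of 1] claim[of "-1"] by auto
  finally show ?thesis .
qed

lemma state_hermitian_le:
  fixes H :: "'g::group_add op"
  assumes \<phi>: "is_state \<phi>" and H: "H \<in> Cred" and h: "h \<in> l2" and sym: "\<And>g. h (- g) = cnj (h g)"
    and Hh: "\<And>f. f \<in> l2 \<Longrightarrow> H f = conv h f" and K: "maps_l2_bounded (conv h) K" "0 \<le> K"
  shows "cmod (\<phi> H) \<le> K"
proof (rule field_le_epsilon)
  fix e :: real assume e: "0 < e"
  show "cmod (\<phi> H) \<le> K + e"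
  proof (rule state_le_of_form_bound[OF \<phi> H])
    fix f :: "'g vec" assume f: "f \<in> l2"
    have "cmod (l2inner f (conv h f)) \<le> l2norm f * (K * l2norm f)"
      using l2inner_le[OF f] K(1) f mult_left_mono[of _ "K * l2norm f" "l2norm f"]
      by (auto simp: maps_l2_bounded_def intro: order_trans)
    also have "\<dots> \<le> (K + e) * (l2norm f)\<^sup>2" using e by (simp add: power2_eq_square algebra_simps)
    finally show "Im (l2inner f (H f)) = 0 \<and> cmod (l2inner f (H f)) \<le> (K + e) * (l2norm f)\<^sup>2"
      using hermitian_conv_form_real[OF h K sym f] Hh[OF f] by simp
  qed (use e K in simp)
qed

lemma maps_l2_bounded_combination:
  assumes "b \<in> l2" "b' \<in> l2" "maps_l2_bounded (conv b) K" "maps_l2_bounded (conv b') K'"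
  shows "maps_l2_bounded (conv (\<lambda>g. c * b g + c' * b' g)) (cmod c * K + cmod c' * K')"
  unfolding maps_l2_bounded_def
proof
  fix f :: "'a vec" assume f: "f \<in> l2"
  have eq: "conv (\<lambda>g. c * b g + c' * b' g) f = (\<lambda>x. c * conv b f x + c' * conv b' f x)"
    using conv_add_scaled_left[OF l2_scaled[OF assms(1), THEN conjunct1] assms(2) f, of c c']
    by (simp add: conv_scaled_left)
  have u: "conv b f \<in> l2" "l2norm (conv b f) \<le> K * l2norm f"
    and v: "conv b' f \<in> l2" "l2norm (conv b' f) \<le> K' * l2norm f"
    using assms(3,4) f by (auto simp: maps_l2_bounded_def)
  note cu = l2_scaled[OF u(1), of c]
  have "l2norm (\<lambda>x. c * conv b f x + c' * conv b' f x) \<le> cmod c * l2norm (conv b f) + cmod c' * l2norm (conv b' f)"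
    using l2_add_scaled[OF cu[THEN conjunct1] v(1), of c'] cu by simp
  also have "\<dots> \<le> (cmod c * K + cmod c' * K') * l2norm f"
    using u(2) v(2) by (simp add: distrib_right mult.assoc add_mono mult_left_mono)
  finally show "conv (\<lambda>g. c * b g + c' * b' g) f \<in> l2 \<and>
      l2norm (conv (\<lambda>g. c * b g + c' * b' g) f) \<le> (cmod c * K + cmod c' * K') * l2norm f"
    using eq l2_add_scaled[OF cu[THEN conjunct1] v(1), of c'] by simp
qed

text \<open>Split \<open>X\<close> into the hermitian parts \<open>X + X\<^sup>*\<close> and \<open>i(X - X\<^sup>*)\<close>; their kernels are
  \<open>b + b\<^sup>*\<close> and \<open>i b - i b\<^sup>*\<close>, where \<open>b = X \<delta>\<^sub>0\<close>.\<close>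
lemma state_norm_le:
  fixes X :: "'g::group_add op"
  assumes \<phi>: "is_state \<phi>" and X: "X \<in> Cred"
  shows "cmod (\<phi> X) \<le> 2 * opnorm X"
proof -
  define b where "b = X (delta 0)"
  define K where "K = opnorm X"
  note bK = Cred_maps_l2_bounded[OF X, folded b_def K_def]
  have ab: "adj b \<in> l2" using l2_adj[OF bK(1)] by blast
  have abK: "maps_l2_bounded (conv (adj b)) K" by (rule maps_l2_bounded_adj[OF bK(1) bK(3) bK(2)])
  define Y where "Y = Conv (adj b)"
  have Y: "Y \<in> Cred" unfolding Y_def b_def by (rule Cred_Conv_adj[OF X])
  have conv_comb: "(\<lambda>x. c * X f x + c' * Y f x) = conv (\<lambda>g. c * b g + c' * adj b g) f"
    if "f \<in> l2" for f c c'
    using conv_add_scaled_left[OF l2_scaled[OF bK(1), THEN conjunct1] ab that, of c c']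
      Cred_eq_conv[OF X that] that
    by (simp add: Y_def Conv_def b_def conv_scaled_left)
  have hermitian: "cmod (\<phi> (\<lambda>f x. c * X f x + cnj c * Y f x)) \<le> 2 * K" if "cmod c = 1" for c
  proof (rule state_hermitian_le[OF \<phi> Cred_combination[OF Cred_scaled[OF X] Y]])
    show "(\<lambda>g. c * b g + cnj c * adj b g) \<in> l2"
      using l2_add_scaled[OF l2_scaled[OF bK(1), THEN conjunct1] ab] by blast
    show "maps_l2_bounded (conv (\<lambda>g. c * b g + cnj c * adj b g)) (2 * K)"
      using maps_l2_bounded_combination[OF bK(1) ab bK(2) abK, of c "cnj c"] that by simp
  qed (use conv_comb bK(3) in \<open>auto simp: adj_def\<close>)
  have lin: "\<phi> (\<lambda>f x. c * X f x + c' * Y f x) = c * \<phi> X + c' * \<phi> Y" for c c'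
    using state_combination[OF \<phi> Cred_scaled[OF X] Y, of c c'] state_scaled[OF \<phi> X, of c] by simp
  have parts: "cmod (c * \<phi> X + cnj c * \<phi> Y) \<le> 2 * K" if "cmod c = 1" for c
    using hermitian[OF that] unfolding lin .
  have "2 * \<phi> X = (1 * \<phi> X + cnj 1 * \<phi> Y) - \<i> * (\<i> * \<phi> X + cnj \<i> * \<phi> Y)"
    by (simp add: algebra_simps)
  then have "cmod (2 * \<phi> X) \<le> cmod (1 * \<phi> X + cnj 1 * \<phi> Y) + cmod (\<i> * \<phi> X + cnj \<i> * \<phi> Y)"
    using norm_triangle_ineq4 by (metis mult_1 norm_ii norm_mult)
  then have "2 * cmod (\<phi> X) \<le> 2 * K + 2 * K"
    using parts[of 1] parts[of \<i>] by (simp add: norm_mult)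
  then show ?thesis by (simp add: K_def)
qed

section \<open>Lipschitz elements\<close>

lemma length_translate_diff_le:
  fixes L :: "'g::group_add \<Rightarrow> real"
  assumes subadd: "\<forall>g h. L (g + h) \<le> L g + L h" and symm: "\<forall>g. L (- g) = L g"
  shows "\<bar>L x - L (- g + x)\<bar> \<le> L g"
proof -
  have "L x \<le> L g + L (- g + x)"
    using subadd[rule_format, of g "- g + x"] by (simp add: add.assoc[symmetric])
  moreover have "L (- g + x) \<le> L g + L x"
    using subadd[rule_format, of "- g" x] symm by simp
  ultimately show ?thesis by linarith
qed

lemma finite_support_translate:
  fixes \<xi> :: "'g::group_add vec"
  assumes "finite {y. \<xi> y \<noteq> 0}"
  shows "finite {x. \<xi> (- g + x) \<noteq> 0}"
proof -
  have "{x. \<xi> (- g + x) \<noteq> 0} \<subseteq> (\<lambda>y. g + y) ` {y. \<xi> y \<noteq> 0}"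
    by (auto intro!: image_eqI[of _ _ "- g + _"] simp: add.assoc[symmetric])
  then show ?thesis using assms finite_surj by blast
qed

text \<open>The commutator \<open>[D, \<lambda>\<^sub>g]\<close> is multiplication by \<open>L x - L(g\<^sup>-\<^sup>1 x)\<close> after translation,
  which subadditivity bounds by \<open>L g\<close>.\<close>
lemma lip1_scaled_lreg:
  fixes L :: "'g::group_add \<Rightarrow> real"
  assumes subadd: "\<forall>g h. L (g + h) \<le> L g + L h" and symm: "\<forall>g. L (- g) = L g"
    and Lg: "L g > 0"
  shows "lip1 L (grop {g} (\<lambda>_. complex_of_real (1 / L g)))"
proof -
  define s where "s = complex_of_real (1 / L g)"
  have T: "grop {g} (\<lambda>_. s) f = (\<lambda>x. s * f (- g + x))" if "f \<in> l2" for f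
    using that by (simp add: grop_def)
  show ?thesis unfolding lip1_def s_def[symmetric]
  proof (intro conjI allI impI)
    show "grop {g} (\<lambda>_. s) \<in> Cred" by (rule Cred_grop) simp
    fix \<xi> :: "'g vec" assume fin: "finite {x. \<xi> x \<noteq> 0}"
    have \<xi>: "\<xi> \<in> l2" by (rule l2_finite_support[OF fin])
    have L\<xi>: "(\<lambda>y. complex_of_real (L y) * \<xi> y) \<in> l2"
      by (rule l2_finite_support, rule finite_subset[OF _ fin]) auto
    show "(\<lambda>x. complex_of_real (L x) * grop {g} (\<lambda>_. s) \<xi> x) \<in> l2"
      unfolding T[OF \<xi>]
      by (rule l2_finite_support, rule finite_subset[OF _ finite_support_translate[OF fin, of g]]) auto
    have "cmod (complex_of_real (L x) * grop {g} (\<lambda>_. s) \<xi> x - grop {g} (\<lambda>_. s) (\<lambda>y. complex_of_real (L y) * \<xi> y) x)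
        \<le> 1 * cmod (\<xi> (- g + x))" for x
    proof -
      have "complex_of_real (L x) * grop {g} (\<lambda>_. s) \<xi> x - grop {g} (\<lambda>_. s) (\<lambda>y. complex_of_real (L y) * \<xi> y) x
          = s * complex_of_real (L x - L (- g + x)) * \<xi> (- g + x)"
        unfolding T[OF \<xi>] T[OF L\<xi>] by (simp add: algebra_simps)
      also have "cmod \<dots> = (1 / L g) * \<bar>L x - L (- g + x)\<bar> * cmod (\<xi> (- g + x))"
        unfolding norm_mult norm_of_real using Lg by (simp add: s_def norm_divide)
      also have "\<dots> \<le> (1 / L g) * L g * cmod (\<xi> (- g + x))"
        using length_translate_diff_le[OF subadd symm, of x g] Lg by (intro mult_right_mono mult_left_mono) auto
      finally show ?thesis using Lg by simp
    qed
    then have "l2norm (\<lambda>x. complex_of_real (L x) * grop {g} (\<lambda>_. s) \<xi> x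
        - grop {g} (\<lambda>_. s) (\<lambda>y. complex_of_real (L y) * \<xi> y) x) \<le> 1 * l2norm (\<lambda>x. \<xi> (- g + x))"
      by (rule l2_dominated[OF l2_translate[OF \<xi>, THEN conjunct1], THEN conjunct2]) simp
    then show "l2norm (\<lambda>x. complex_of_real (L x) * grop {g} (\<lambda>_. s) \<xi> x
        - grop {g} (\<lambda>_. s) (\<lambda>y. complex_of_real (L y) * \<xi> y) x) \<le> l2norm \<xi>"
      using l2_translate[OF \<xi>, of g] by simp
  qed
qed

lemma lip1_weighted_kernel:
  fixes L :: "'g::group_add \<Rightarrow> real"
  assumes lip: "lip1 L T" and zero: "L 0 = 0"
  shows "(\<lambda>x. complex_of_real (L x) * T (delta 0) x) \<in> l2 \<and>
    l2norm (\<lambda>x. complex_of_real (L x) * T (delta 0) x) \<le> 1"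
proof -
  have T: "T \<in> Cred" using lip by (simp add: lip1_def)
  have fin: "finite {x. delta (0::'g) x \<noteq> 0}" by (simp add: delta_def)
  have z: "(\<lambda>y. complex_of_real (L y) * delta 0 y) = (\<lambda>_. 0)" using zero by (auto simp: delta_def fun_eq_iff)
  have "(\<lambda>x. complex_of_real (L x) * T (delta 0) x) \<in> l2 \<and>
      l2norm (\<lambda>x. complex_of_real (L x) * T (delta 0) x - T (\<lambda>y. complex_of_real (L y) * delta 0 y) x)
        \<le> l2norm (delta (0::'g))"
    using lip fin unfolding lip1_def by blast
  then show ?thesis using bdd_op_zero[OF Cred_bdd_op[OF T]] by (simp add: z)
qed

lemma lip1_kernel_le:
  fixes L :: "'g::group_add \<Rightarrow> real"
  assumes "lip1 L T" "L 0 = 0" "L g > 0"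
  shows "cmod (T (delta 0) g) \<le> 1 / L g"
proof -
  note w = lip1_weighted_kernel[OF assms(1,2)]
  have "L g * cmod (T (delta 0) g) \<le> 1"
    using norm_le_l2norm[OF w[THEN conjunct1], of g] w assms(3) by (simp add: norm_mult)
  then show ?thesis using assms(3) by (simp add: field_simps)
qed

definition inv_sq_tail_le :: "('g \<Rightarrow> real) \<Rightarrow> real \<Rightarrow> real \<Rightarrow> bool" where
  "inv_sq_tail_le L R \<tau> \<longleftrightarrow> (\<forall>E. finite E \<longrightarrow> (\<forall>g\<in>E. R < L g) \<longrightarrow> (\<Sum>g\<in>E. 1 / (L g)\<^sup>2) \<le> \<tau>\<^sup>2)"

lemma inv_sq_tail_le_exists:
  fixes L :: "'g::group_add \<Rightarrow> real"
  assumes zero: "L 0 = 0" and nonneg: "\<forall>g. L g \<ge> 0"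
    and summ: "(\<lambda>g. 1 / (L g)\<^sup>2) summable_on (UNIV - {0})" and \<tau>: "\<tau> > 0"
  obtains R where "R > 0" "inv_sq_tail_le L R \<tau>"
proof -
  define S where "S = (\<Sum>\<^sub>\<infinity>g\<in>UNIV - {0}. 1 / (L g)\<^sup>2)"
  obtain F where F: "finite F" "F \<subseteq> UNIV - {0}" and d: "dist (\<Sum>g\<in>F. 1 / (L g)\<^sup>2) S \<le> \<tau>\<^sup>2"
    using infsum_finite_approximation[OF summ, of "\<tau>\<^sup>2"] \<tau> by (auto simp: S_def)
  define R where "R = 1 + (\<Sum>g\<in>F. L g)"
  have R: "R > 0" unfolding R_def using nonneg by (simp add: sum_nonneg add_pos_nonneg)
  have LF: "L g < R" if "g \<in> F" for g
    using member_le_sum[OF that, of L] nonneg F(1) by (simp add: R_def)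
  have "(\<Sum>g\<in>E. 1 / (L g)\<^sup>2) \<le> \<tau>\<^sup>2" if E: "finite E" "\<forall>g\<in>E. R < L g" for E
  proof -
    have EF: "E \<inter> F = {}" using E(2) LF by fastforce
    have E0: "0 \<notin> E" using E(2) zero R by auto
    have "(\<Sum>g\<in>E. 1 / (L g)\<^sup>2) + (\<Sum>g\<in>F. 1 / (L g)\<^sup>2) = (\<Sum>g\<in>E \<union> F. 1 / (L g)\<^sup>2)"
      by (rule sum.union_disjoint[symmetric]) (use E F EF in auto)
    also have "\<dots> \<le> S" unfolding S_def
      by (rule finite_sum_le_infsum[OF summ]) (use E F E0 in auto)
    finally show ?thesis using d by (simp add: dist_real_def)
  qed
  with R that show ?thesis unfolding inv_sq_tail_le_def by blast
qed

text \<open>Cauchy--Schwarz against \<open>\<parallel>L \<cdot> T \<delta>\<^sub>0\<parallel> \<le> 1\<close> bounds the \<open>\<ell>\<^sup>1\<close> norm of the kernel outside the ball.\<close>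
lemma lip1_kernel_tail_l1:
  fixes L :: "'g::group_add \<Rightarrow> real"
  assumes lip: "lip1 L T" and zero: "L 0 = 0" and R: "R > 0" and \<tau>: "0 \<le> \<tau>"
    and tail: "inv_sq_tail_le L R \<tau>"
  shows "(\<lambda>g. cmod (if L g \<le> R then 0 else T (delta 0) g)) summable_on UNIV \<and>
     (\<Sum>\<^sub>\<infinity>g. cmod (if L g \<le> R then 0 else T (delta 0) g)) \<le> \<tau>"
proof -
  define a where "a = T (delta 0)"
  note la = lip1_weighted_kernel[OF lip zero, folded a_def]
  have b: "(\<Sum>g\<in>E. cmod (if L g \<le> R then 0 else a g)) \<le> \<tau>" if E: "finite E" for E
  proof -
    define E' where "E' = E \<inter> {g. R < L g}"
    have E': "finite E'" "\<forall>g\<in>E'. R < L g" using E by (auto simp: E'_def)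
    have "(\<Sum>g\<in>E. cmod (if L g \<le> R then 0 else a g)) = (\<Sum>g\<in>E'. cmod (a g))"
      unfolding E'_def by (rule sum.mono_neutral_cong_right) (use E in auto)
    also have "\<dots> = (\<Sum>g\<in>E'. \<bar>cmod (complex_of_real (L g) * a g)\<bar> * \<bar>1 / L g\<bar>)"
    proof (rule sum.cong)
      fix g assume "g \<in> E'"
      then have "L g > 0" using E'(2) R by force
      then show "cmod (a g) = \<bar>cmod (complex_of_real (L g) * a g)\<bar> * \<bar>1 / L g\<bar>"
        by (simp add: norm_mult)
    qed simp
    also have "\<dots> \<le> L2_set (\<lambda>g. cmod (complex_of_real (L g) * a g)) E' * L2_set (\<lambda>g. 1 / L g) E'"
      by (rule L2_set_mult_ineq)
    also have "\<dots> \<le> 1 * \<tau>"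
    proof (rule mult_mono)
      show "L2_set (\<lambda>g. cmod (complex_of_real (L g) * a g)) E' \<le> 1"
        using L2_set_le_l2norm[OF la[THEN conjunct1], of E'] la by linarith
      have "(\<Sum>g\<in>E'. (1 / L g)\<^sup>2) \<le> \<tau>\<^sup>2"
        using tail E' unfolding inv_sq_tail_le_def by (simp add: power_divide)
      then have "sqrt (\<Sum>g\<in>E'. (1 / L g)\<^sup>2) \<le> sqrt (\<tau>\<^sup>2)" by (rule real_sqrt_le_mono)
      then show "L2_set (\<lambda>g. 1 / L g) E' \<le> \<tau>"
        unfolding L2_set_def using \<tau> by simp
    qed (auto simp: \<tau>)
    finally show ?thesis by simp
  qed
  have s: "(\<lambda>g. cmod (if L g \<le> R then 0 else a g)) summable_on UNIV"
    by (rule nonneg_bdd_above_summable_on) (auto intro!: bdd_aboveI2 b)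
  then show ?thesis unfolding a_def[symmetric] using infsum_le_finite_sums[OF s] b by auto
qed

lemma lip1_opnorm_sub_ball_le:
  fixes L :: "'g::group_add \<Rightarrow> real"
  assumes lip: "lip1 L T" and zero: "L 0 = 0" and R: "R > 0" and \<tau>: "0 \<le> \<tau>"
    and finG: "finite {g. L g \<le> R}" and tail: "inv_sq_tail_le L R \<tau>"
  shows "opnorm (\<lambda>f x. T f x - grop {g. L g \<le> R} (T (delta 0)) f x) \<le> \<tau>"
proof (rule opnorm_least)
  fix f :: "'g vec" assume f: "f \<in> l2" "l2norm f \<le> 1"
  define a where "a = T (delta 0)"
  define t where "t = (\<lambda>g. if L g \<le> R then 0 else a g)"
  have T: "T \<in> Cred" using lip by (simp add: lip1_def)
  have a: "a \<in> l2" unfolding a_def by (rule Cred_maps_l2_bounded(1)[OF T])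
  define k where "k = (\<lambda>g. if g \<in> {g. L g \<le> R} then a g else 0)"
  have k: "k \<in> l2" by (rule l2_finite_support, rule finite_subset[OF _ finG]) (auto simp: k_def)
  have "(\<lambda>x. T f x - grop {g. L g \<le> R} a f x) = conv t f"
  proof
    fix x
    have "T f = conv a f" unfolding a_def by (rule Cred_eq_conv[OF T f(1)])
    moreover have "grop {g. L g \<le> R} a f = conv k f"
      unfolding k_def by (rule conv_finite_kernel_eq_grop[OF finG f(1), symmetric])
    ultimately have "T f x - grop {g. L g \<le> R} a f x = conv a f x - conv k f x" by simp
    also have "\<dots> = conv (\<lambda>g. a g - k g) f x" by (rule conv_diff_left[OF a k f(1)])
    also have "(\<lambda>g. a g - k g) = t" by (auto simp: fun_eq_iff k_def t_def)
    finally show "T f x - grop {g. L g \<le> R} a f x = conv t f x" .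
  qed
  moreover have tl: "(\<lambda>g. cmod (t g)) summable_on UNIV" "(\<Sum>\<^sub>\<infinity>g. cmod (t g)) \<le> \<tau>"
    using lip1_kernel_tail_l1[OF lip zero R \<tau> tail] unfolding t_def a_def by auto
  ultimately have "l2norm (\<lambda>x. T f x - grop {g. L g \<le> R} a f x) \<le> (\<Sum>\<^sub>\<infinity>g. cmod (t g)) * l2norm f"
    using Young_conv_l1_l2[OF tl(1) f(1)] by simp
  also have "\<dots> \<le> \<tau> * 1" using tl(2) f(2) \<tau> by (intro mult_mono) simp_all
  finally show "l2norm (\<lambda>x. T f x - grop {g. L g \<le> R} (T (delta 0)) f x) \<le> \<tau>" by (simp add: a_def)
qed

section \<open>The metric and the weak-* topology\<close>

lemma state_diff_le_approx:
  fixes T :: "'g::group_add op"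
  assumes \<phi>: "is_state \<phi>" and \<psi>: "is_state \<psi>" and T: "T \<in> Cred" and G: "finite G"
    and approx: "opnorm (\<lambda>f x. T f x - grop G c f x) \<le> \<eta>"
  shows "cmod (\<phi> T - \<psi> T) \<le> 4 * \<eta> + (\<Sum>g\<in>G. cmod (c g) * cmod (\<phi> (lreg g) - \<psi> (lreg g)))"
proof -
  define X where "X = (\<lambda>f x. T f x - grop G c f x)"
  have X: "X \<in> Cred"
    using Cred_combination[OF T Cred_grop[OF G], of "-1"] by (simp add: X_def)
  have X_small: "cmod (\<rho> X) \<le> 2 * \<eta>" if "is_state \<rho>" for \<rho>
    using state_norm_le[OF that X] approx by (simp add: X_def)
  have split: "\<rho> T = \<rho> X + (\<Sum>g\<in>G. c g * \<rho> (lreg g))" if "is_state \<rho>" for \<rho>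
  proof -
    have "\<rho> (\<lambda>f x. X f x + 1 * grop G c f x) = \<rho> X + 1 * \<rho> (grop G c)"
      by (rule state_combination[OF that X Cred_grop[OF G]])
    moreover have "(\<lambda>f x. X f x + 1 * grop G c f x) = T" by (simp add: X_def)
    ultimately show ?thesis using state_grop[OF that G] by simp
  qed
  have "\<phi> T - \<psi> T = (\<phi> X - \<psi> X) + (\<Sum>g\<in>G. c g * (\<phi> (lreg g) - \<psi> (lreg g)))"
    using split[OF \<phi>] split[OF \<psi>] by (simp add: algebra_simps sum_subtractf)
  then have "cmod (\<phi> T - \<psi> T) \<le> cmod (\<phi> X - \<psi> X) + cmod (\<Sum>g\<in>G. c g * (\<phi> (lreg g) - \<psi> (lreg g)))"
    by (simp add: norm_triangle_ineq)
  also have "\<dots> \<le> cmod (\<phi> X - \<psi> X) + (\<Sum>g\<in>G. cmod (c g * (\<phi> (lreg g) - \<psi> (lreg g))))"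
    by (rule add_left_mono[OF norm_sum])
  moreover have "cmod (\<phi> X - \<psi> X) \<le> 4 * \<eta>"
    using X_small[OF \<phi>] X_small[OF \<psi>] norm_triangle_ineq4[of "\<phi> X" "\<psi> X"] by linarith
  ultimately show ?thesis by (simp add: norm_mult)
qed

text \<open>The estimate behind both halves of the theorem: the kernel of a Lipschitz element is
  \<open>\<tau>\<close>-small outside the ball of radius \<open>R\<close> and bounded by \<open>1/L\<close> inside it, while the
  identity term does not separate states.\<close>
lemma lip1_state_diff_le:
  fixes L :: "'g::group_add \<Rightarrow> real"
  assumes \<phi>: "is_state \<phi>" and \<psi>: "is_state \<psi>" and lip: "lip1 L T" and zero: "L 0 = 0"
    and pos: "\<forall>g. g \<noteq> 0 \<longrightarrow> L g > 0" and R: "R > 0" and \<tau>: "0 \<le> \<tau>"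
    and finG: "finite {g. L g \<le> R}" and tail: "inv_sq_tail_le L R \<tau>"
  shows "cmod (\<phi> T - \<psi> T) \<le>
    4 * \<tau> + (\<Sum>g\<in>{g. L g \<le> R} - {0}. (1 / L g) * cmod (\<phi> (lreg g) - \<psi> (lreg g)))"
proof -
  define G where "G = {g. L g \<le> R}"
  define a where "a = T (delta 0)"
  have T: "T \<in> Cred" using lip by (simp add: lip1_def)
  have "cmod (\<phi> T - \<psi> T) \<le> 4 * \<tau> + (\<Sum>g\<in>G. cmod (a g) * cmod (\<phi> (lreg g) - \<psi> (lreg g)))"
    using state_diff_le_approx[OF \<phi> \<psi> T finG lip1_opnorm_sub_ball_le[OF lip zero R \<tau> finG tail]]
    by (simp add: G_def a_def)
  also have "(\<Sum>g\<in>G. cmod (a g) * cmod (\<phi> (lreg g) - \<psi> (lreg g))) =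
      (\<Sum>g\<in>G - {0}. cmod (a g) * cmod (\<phi> (lreg g) - \<psi> (lreg g)))"
    using finG by (intro sum.mono_neutral_right) (auto simp: G_def state_one[OF \<phi>] state_one[OF \<psi>])
  also have "\<dots> \<le> (\<Sum>g\<in>G - {0}. (1 / L g) * cmod (\<phi> (lreg g) - \<psi> (lreg g)))"
    using lip1_kernel_le[OF lip zero] pos by (intro sum_mono mult_right_mono) (auto simp: a_def)
  finally show ?thesis by (simp add: G_def)
qed

lemma lip1_le_dist_D: "lip1 L S \<Longrightarrow> ereal (cmod (\<phi> S - \<psi> S)) \<le> dist_D L \<phi> \<psi>"
  unfolding dist_D_def by (rule SUP_upper) simp

lemma dist_D_le_ball_sum:
  fixes L :: "'g::group_add \<Rightarrow> real"
  assumes "is_state \<phi>" "is_state \<psi>" "L 0 = 0" "\<forall>g. g \<noteq> 0 \<longrightarrow> L g > 0" "R > 0" "0 \<le> \<tau>"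
    "finite {g. L g \<le> R}" "inv_sq_tail_le L R \<tau>"
  shows "dist_D L \<phi> \<psi> \<le>
    ereal (4 * \<tau> + (\<Sum>g\<in>{g. L g \<le> R} - {0}. (1 / L g) * cmod (\<phi> (lreg g) - \<psi> (lreg g))))"
  unfolding dist_D_def using lip1_state_diff_le[OF assms(1,2) _ assms(3-)] by (intro SUP_least) simp

lemma state_lreg_diff_le_dist_D:
  fixes L :: "'g::group_add \<Rightarrow> real"
  assumes \<phi>: "is_state \<phi>" and \<psi>: "is_state \<psi>"
    and subadd: "\<forall>g h. L (g + h) \<le> L g + L h" and symm: "\<forall>g. L (- g) = L g"
    and zero: "L 0 = 0" and pos: "\<forall>g. g \<noteq> 0 \<longrightarrow> L g > 0" and d: "dist_D L \<phi> \<psi> < ereal e"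
  shows "cmod (\<phi> (lreg g) - \<psi> (lreg g)) \<le> L g * e"
proof (cases "g = 0")
  case True then show ?thesis using state_one[OF \<phi>] state_one[OF \<psi>] zero by simp
next
  case False
  then have Lg: "L g > 0" using pos by blast
  define S where "S = grop {g} (\<lambda>_. complex_of_real (1 / L g))"
  have "ereal (cmod (\<phi> S - \<psi> S)) < ereal e"
    using lip1_le_dist_D[OF lip1_scaled_lreg[OF subadd symm Lg, folded S_def]] d by (rule order_le_less_trans)
  moreover have "\<rho> S = complex_of_real (1 / L g) * \<rho> (lreg g)" if "is_state \<rho>" for \<rho>
    using state_grop[OF that, of "{g}" "\<lambda>_. complex_of_real (1 / L g)"] by (simp add: S_def)
  then have "\<phi> S - \<psi> S = complex_of_real (1 / L g) * (\<phi> (lreg g) - \<psi> (lreg g))"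
    using \<phi> \<psi> by (simp add: right_diff_distrib)
  then have "cmod (\<phi> S - \<psi> S) = cmod (\<phi> (lreg g) - \<psi> (lreg g)) / L g"
    using Lg by (simp add: norm_mult norm_divide)
  ultimately show ?thesis using Lg by (simp add: divide_less_eq mult.commute)
qed

text \<open>Conversely, evaluation at any element of the C*-algebra is \<open>d\<close>-continuous: approximate the
  element by a finite combination of translations, on which \<open>d\<close> controls the states.\<close>
lemma state_eval_continuous_dist_D:
  fixes L :: "'g::group_add \<Rightarrow> real"
  assumes \<phi>: "is_state \<phi>" and T: "T \<in> Cred" and r: "r > 0"
    and subadd: "\<forall>g h. L (g + h) \<le> L g + L h" and symm: "\<forall>g. L (- g) = L g"
    and zero: "L 0 = 0" and nonneg: "\<forall>g. L g \<ge> 0" and pos: "\<forall>g. g \<noteq> 0 \<longrightarrow> L g > 0"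
  obtains e where "e > 0" "\<And>\<psi>. is_state \<psi> \<Longrightarrow> dist_D L \<phi> \<psi> < ereal e \<Longrightarrow> cmod (\<psi> T - \<phi> T) < r"
proof -
  define \<eta> where "\<eta> = r / 8"
  have \<eta>: "\<eta> > 0" using r by (simp add: \<eta>_def)
  obtain G c where G: "finite G" and op: "opnorm (\<lambda>f x. T f x - grop G c f x) < \<eta>"
    using Cred_approx[OF T \<eta>] by blast
  define M where "M = (\<Sum>g\<in>G. cmod (c g) * L g)"
  have M: "0 \<le> M" unfolding M_def using nonneg by (simp add: sum_nonneg)
  define e where "e = \<eta> / (M + 1)"
  have e: "e > 0" using \<eta> M by (simp add: e_def)
  have "cmod (\<psi> T - \<phi> T) < r" if \<psi>: "is_state \<psi>" and d: "dist_D L \<phi> \<psi> < ereal e" for \<psi>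
  proof -
    have "cmod (\<psi> T - \<phi> T) \<le> 4 * \<eta> + (\<Sum>g\<in>G. cmod (c g) * cmod (\<phi> (lreg g) - \<psi> (lreg g)))"
      using state_diff_le_approx[OF \<phi> \<psi> T G less_imp_le[OF op]] by (simp add: norm_minus_commute)
    also have "\<dots> \<le> 4 * \<eta> + (\<Sum>g\<in>G. cmod (c g) * (L g * e))"
      by (intro add_left_mono sum_mono mult_left_mono state_lreg_diff_le_dist_D[OF \<phi> \<psi> subadd symm zero pos d])
        simp
    also have "(\<Sum>g\<in>G. cmod (c g) * (L g * e)) = M * e"
      by (simp add: M_def sum_distrib_left mult_ac)
    also have "M * e \<le> \<eta>"
      using M \<eta> by (simp add: e_def divide_le_eq)
    finally show ?thesis using \<eta> by (simp add: \<eta>_def)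
  qed
  with e that show ?thesis by blast
qed

lemma ex_common_radius:
  fixes d :: "'a \<Rightarrow> ereal"
  assumes "finite J" "\<And>i. i \<in> J \<Longrightarrow> \<exists>e>0. \<forall>\<psi>. d \<psi> < ereal e \<longrightarrow> Q i \<psi>"
  shows "\<exists>e>0. \<forall>\<psi>. d \<psi> < ereal e \<longrightarrow> (\<forall>i\<in>J. Q i \<psi>)"
  using assms
proof (induction J rule: finite_induct)
  case empty then show ?case by (auto intro: exI[of _ 1])
next
  case (insert j J)
  obtain e1 where e1: "e1 > 0" "\<forall>\<psi>. d \<psi> < ereal e1 \<longrightarrow> Q j \<psi>" using insert.prems by blast
  obtain e2 where e2: "e2 > 0" "\<forall>\<psi>. d \<psi> < ereal e2 \<longrightarrow> (\<forall>i\<in>J. Q i \<psi>)" using insert by blast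
  have "d \<psi> < ereal e1 \<and> d \<psi> < ereal e2" if "d \<psi> < ereal (min e1 e2)" for \<psi>
    using that by (meson ereal_less_eq(3) min.cobounded1 min.cobounded2 order_less_le_trans)
  then show ?case using e1 e2 by (intro exI[of _ "min e1 e2"]) auto
qed

lemma dist_D_finite:
  fixes L :: "'g::group_add \<Rightarrow> real"
  assumes \<phi>: "is_state \<phi>" and \<psi>: "is_state \<psi>"
    and zero: "L 0 = 0" and nonneg: "\<forall>g. L g \<ge> 0" and pos: "\<forall>g. g \<noteq> 0 \<longrightarrow> L g > 0"
    and balls: "\<forall>c>0. finite {g. L g \<le> c}" and summ: "(\<lambda>g. 1 / (L g)\<^sup>2) summable_on (UNIV - {0})"
  shows "dist_D L \<phi> \<psi> < \<infinity>"
proof -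
  obtain R where R: "R > 0" "inv_sq_tail_le L R 1"
    using inv_sq_tail_le_exists[OF zero nonneg summ, of 1] by auto
  have "dist_D L \<phi> \<psi> \<le> ereal (4 * 1 + (\<Sum>g\<in>{g. L g \<le> R} - {0}. (1 / L g) * cmod (\<phi> (lreg g) - \<psi> (lreg g))))"
    using balls R by (intro dist_D_le_ball_sum[OF \<phi> \<psi> zero pos]) auto
  also have "\<dots> < \<infinity>" by simp
  finally show ?thesis .
qed

lemma state_eval_eventually_in_open:
  fixes L :: "'g::group_add \<Rightarrow> real"
  assumes \<phi>: "is_state \<phi>" and iC: "i \<in> Cred" and V: "open V" "\<phi> i \<in> V"
    and subadd: "\<forall>g h. L (g + h) \<le> L g + L h" and symm: "\<forall>g. L (- g) = L g"
    and zero: "L 0 = 0" and nonneg: "\<forall>g. L g \<ge> 0" and pos: "\<forall>g. g \<noteq> 0 \<longrightarrow> L g > 0"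
  shows "\<exists>e>0. \<forall>\<psi>. dist_D L \<phi> \<psi> < ereal e \<longrightarrow> (is_state \<psi> \<longrightarrow> \<psi> i \<in> V)"
proof -
  obtain r where r: "r > 0" "ball (\<phi> i) r \<subseteq> V" using V by (rule openE)
  obtain e where e: "e > 0"
    and close: "\<And>\<psi>. is_state \<psi> \<Longrightarrow> dist_D L \<phi> \<psi> < ereal e \<Longrightarrow> cmod (\<psi> i - \<phi> i) < r"
    using state_eval_continuous_dist_D[OF \<phi> iC r(1) subadd symm zero nonneg pos] by blast
  have "\<psi> i \<in> V" if "is_state \<psi>" "dist_D L \<phi> \<psi> < ereal e" for \<psi>
  proof -
    have "\<psi> i \<in> ball (\<phi> i) r"
      using close[OF that] by (simp add: dist_norm norm_minus_commute)
    then show ?thesis using r(2) by blast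
  qed
  with e show ?thesis by blast
qed

lemma openin_weakstar_lreg_nbhd:
  assumes G: "finite G"
  shows "openin weakstar {\<psi> \<in> states. \<forall>g\<in>G. cmod (\<psi> (lreg g) - \<phi> (lreg g)) < \<eta>}"
proof -
  define P where "P = product_topology (\<lambda>_. euclidean :: complex topology) (Cred :: 'a op set)"
  define W where "W = (\<Inter>g\<in>G. {x \<in> topspace P. x (lreg g) \<in> ball (\<phi> (lreg g)) \<eta>}) \<inter> topspace P"
  have "openin P W" unfolding W_def
  proof (rule openin_INT[OF G])
    fix g assume "g \<in> G"
    show "openin P {x \<in> topspace P. x (lreg g) \<in> ball (\<phi> (lreg g)) \<eta>}"
      unfolding P_def
      by (rule openin_continuous_map_preimage[OF continuous_map_product_projection[OF lreg_Cred]]) simp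
  qed
  moreover have "{\<psi> \<in> states. \<forall>g\<in>G. cmod (\<psi> (lreg g) - \<phi> (lreg g)) < \<eta>} =
      (\<lambda>\<phi>. restrict \<phi> Cred) -` W \<inter> states"
    by (auto simp: W_def P_def lreg_Cred dist_norm norm_minus_commute)
  ultimately show ?thesis unfolding weakstar_def openin_pullback_topology P_def by blast
qed

lemma weakstar_open_imp_dist_D_open:
  fixes L :: "'g::group_add \<Rightarrow> real"
  assumes subadd: "\<forall>g h. L (g + h) \<le> L g + L h" and symm: "\<forall>g. L (- g) = L g"
    and zero: "L 0 = 0" and nonneg: "\<forall>g. L g \<ge> 0" and pos: "\<forall>g. g \<noteq> 0 \<longrightarrow> L g > 0"
    and U: "openin weakstar U"
  shows "dist_D_open L U"
proof -
  obtain W where W: "openin (product_topology (\<lambda>_. euclidean) Cred) W"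
    and UW: "U = (\<lambda>\<phi>. restrict \<phi> Cred) -` W \<inter> states"
    using U unfolding weakstar_def openin_pullback_topology by blast
  have "\<exists>e>0. \<forall>\<psi>\<in>states. dist_D L \<phi> \<psi> < ereal e \<longrightarrow> \<psi> \<in> U" if \<phi>U: "\<phi> \<in> U" for \<phi>
  proof -
    have \<phi>: "is_state \<phi>" using \<phi>U UW by (auto simp: states_def)
    have "restrict \<phi> Cred \<in> W" using \<phi>U UW by blast
    then have "\<exists>V. finite {i \<in> Cred. V i \<noteq> topspace euclidean} \<and>
        (\<forall>i\<in>Cred. openin euclidean (V i)) \<and> restrict \<phi> Cred \<in> Pi\<^sub>E Cred V \<and> Pi\<^sub>E Cred V \<subseteq> W"
      using W unfolding openin_product_topology_alt by (rule bspec[rotated])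
    then obtain V where finV: "finite {i \<in> Cred. V i \<noteq> topspace euclidean}"
      and Vo: "\<forall>i\<in>Cred. openin euclidean (V i)" and inV: "restrict \<phi> Cred \<in> Pi\<^sub>E Cred V"
      and VW: "Pi\<^sub>E Cred V \<subseteq> W"
      by (elim exE conjE)
    define J where "J = {i \<in> Cred. V i \<noteq> UNIV}"
    have near: "\<exists>e>0. \<forall>\<psi>. dist_D L \<phi> \<psi> < ereal e \<longrightarrow> (is_state \<psi> \<longrightarrow> \<psi> i \<in> V i)"
      if i: "i \<in> J" for i
    proof (rule state_eval_eventually_in_open[OF \<phi> _ _ _ subadd symm zero nonneg pos])
      show iC: "i \<in> Cred" using i by (simp add: J_def)
      show "open (V i)" using Vo iC open_openin by blast
      show "\<phi> i \<in> V i" using PiE_mem[OF inV iC] iC by simp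
    qed
    have J: "finite J" using finV by (simp add: J_def)
    have "\<exists>e>0. \<forall>\<psi>. dist_D L \<phi> \<psi> < ereal e \<longrightarrow> (\<forall>i\<in>J. is_state \<psi> \<longrightarrow> \<psi> i \<in> V i)"
      by (rule ex_common_radius[OF J near])
    then obtain e where e: "e > 0" "\<forall>\<psi>. dist_D L \<phi> \<psi> < ereal e \<longrightarrow> (\<forall>i\<in>J. is_state \<psi> \<longrightarrow> \<psi> i \<in> V i)"
      by blast
    have "\<psi> \<in> U" if \<psi>: "\<psi> \<in> states" and d: "dist_D L \<phi> \<psi> < ereal e" for \<psi>
    proof -
      have "restrict \<psi> Cred \<in> Pi\<^sub>E Cred V"
      proof (subst PiE_iff, intro conjI ballI)
        fix i :: "'g op" assume iC: "i \<in> Cred"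
        show "restrict \<psi> Cred i \<in> V i"
        proof (cases "i \<in> J")
          case True then show ?thesis using e d \<psi> iC by (auto simp: states_def)
        next
          case False then show ?thesis using iC by (auto simp: J_def)
        qed
      qed simp
      then show ?thesis using VW UW \<psi> by blast
    qed
    with e show ?thesis by blast
  qed
  then show ?thesis using UW unfolding dist_D_open_def by blast
qed

lemma dist_D_open_imp_weakstar_open:
  fixes L :: "'g::group_add \<Rightarrow> real"
  assumes zero: "L 0 = 0" and nonneg: "\<forall>g. L g \<ge> 0" and pos: "\<forall>g. g \<noteq> 0 \<longrightarrow> L g > 0"
    and balls: "\<forall>c>0. finite {g. L g \<le> c}" and summ: "(\<lambda>g. 1 / (L g)\<^sup>2) summable_on (UNIV - {0})"
    and U: "dist_D_open L U"
  shows "openin weakstar U"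
proof -
  have "\<exists>N. openin weakstar N \<and> \<phi> \<in> N \<and> N \<subseteq> U" if \<phi>U: "\<phi> \<in> U" for \<phi> :: "'g op \<Rightarrow> complex"
  proof -
    have \<phi>: "is_state \<phi>" using \<phi>U U by (auto simp: dist_D_open_def states_def)
    obtain e where e: "e > 0" and eU: "\<forall>\<psi>\<in>states. dist_D L \<phi> \<psi> < ereal e \<longrightarrow> \<psi> \<in> U"
      using U \<phi>U unfolding dist_D_open_def by blast
    define \<tau> where "\<tau> = e / 8"
    have \<tau>: "\<tau> > 0" using e by (simp add: \<tau>_def)
    obtain R where R: "R > 0" "inv_sq_tail_le L R \<tau>"
      using inv_sq_tail_le_exists[OF zero nonneg summ \<tau>] by auto
    define G where "G = {g. L g \<le> R}"
    have G: "finite G" using balls R by (simp add: G_def)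
    define M where "M = (\<Sum>g\<in>G - {0}. 1 / L g)"
    have M: "0 \<le> M" unfolding M_def using nonneg by (simp add: sum_nonneg)
    define \<eta> where "\<eta> = \<tau> / (M + 1)"
    have \<eta>: "\<eta> > 0" "M * \<eta> \<le> \<tau>" using \<tau> M by (auto simp: \<eta>_def divide_le_eq)
    define N where "N = {\<psi> \<in> states. \<forall>g\<in>G. cmod (\<psi> (lreg g) - \<phi> (lreg g)) < \<eta>}"
    have "N \<subseteq> U"
    proof
      fix \<psi> assume \<psi>N: "\<psi> \<in> N"
      then have \<psi>: "is_state \<psi>" by (simp add: N_def states_def)
      have "(\<Sum>g\<in>G - {0}. (1 / L g) * cmod (\<phi> (lreg g) - \<psi> (lreg g))) \<le> (\<Sum>g\<in>G - {0}. (1 / L g) * \<eta>)"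
        using \<psi>N nonneg by (intro sum_mono mult_left_mono) (auto simp: N_def norm_minus_commute less_imp_le)
      also have "\<dots> = M * \<eta>" by (simp add: M_def sum_distrib_right)
      finally have sum_le: "(\<Sum>g\<in>G - {0}. (1 / L g) * cmod (\<phi> (lreg g) - \<psi> (lreg g))) \<le> M * \<eta>" .
      have "dist_D L \<phi> \<psi> \<le> ereal (4 * \<tau> + (\<Sum>g\<in>G - {0}. (1 / L g) * cmod (\<phi> (lreg g) - \<psi> (lreg g))))"
        unfolding G_def using \<tau> G R by (intro dist_D_le_ball_sum[OF \<phi> \<psi> zero pos]) (auto simp: G_def)
      also have "\<dots> \<le> ereal (4 * \<tau> + M * \<eta>)" using sum_le by simp
      also have "\<dots> < ereal e" using \<eta>(2) e \<tau>_def by simp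
      finally show "\<psi> \<in> U" using eU \<psi>N by (simp add: N_def)
    qed
    moreover have "openin weakstar N"
      unfolding N_def by (rule openin_weakstar_lreg_nbhd[OF G])
    moreover have "\<phi> \<in> N" using \<phi> \<eta> by (simp add: N_def states_def)
    ultimately show ?thesis by blast
  qed
  then show "openin weakstar U" by (subst openin_subopen) blast
qed

theorem mainTheorem4:
  fixes L :: "'g::group_add \<Rightarrow> real"
  assumes subadd: "\<forall>g h. L (g + h) \<le> L g + L h"
    and symm: "\<forall>g. L (- g) = L g"
    and zero: "L 0 = 0"
    and nonneg: "\<forall>g. L g \<ge> 0"
    and pos: "\<forall>g. g \<noteq> 0 \<longrightarrow> L g > 0"
    and balls: "\<forall>c>0. finite {g. L g \<le> c}"
    and summ: "(\<lambda>g. 1 / (L g)\<^sup>2) summable_on (UNIV - {0})"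
  shows "(\<forall>\<phi>\<in>states. \<forall>\<psi>\<in>states. dist_D L \<phi> \<psi> < \<infinity>) \<and>
         (\<forall>U \<subseteq> states. openin weakstar U \<longleftrightarrow> dist_D_open L U)"
proof (intro conjI ballI allI impI)
  fix \<phi> \<psi> :: "'g op \<Rightarrow> complex" assume "\<phi> \<in> states" "\<psi> \<in> states"
  then show "dist_D L \<phi> \<psi> < \<infinity>"
    by (intro dist_D_finite[OF _ _ zero nonneg pos balls summ]) (simp_all add: states_def)
next
  fix U :: "('g op \<Rightarrow> complex) set" assume "U \<subseteq> states"
  show "openin weakstar U \<longleftrightarrow> dist_D_open L U"
    using weakstar_open_imp_dist_D_open[OF subadd symm zero nonneg pos]
      dist_D_open_imp_weakstar_open[OF zero nonneg pos balls summ] by blast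
qed

end
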